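(* For every $m\ge 2$, the number of blockers in $CK(2m)$ is $m\cdot 2^{m-1}$.
   Context: $CK(2m)$ denotes the complete convex geometric graph whose vertices are the $2m$ vertices of a convex polygon, labelled cyclically $0,1,\dots,2m-1$ (labels modulo $2m$), and whose edges are all straight segments between pairs of vertices. Two edges with four distinct endpoints cross iff their endpoints alternate in the cyclic order. A simple perfect matching (SPM) is a set of $m$ edges that are pairwise disjoint (no common endpoint and no crossing). A blocking set is a set of edges containing at least one edge of every SPM. A blocker is a blocking set with exactly $m$ edges. *)

theory Defs
  imports Main
begin

definition ck_vertices :: "nat \<Rightarrow> nat set" where
  "ck_vertices m = {0..<2*m}"

definition ck_edges :: "nat \<Rightarrow> nat set set" where
  "ck_edges m = {e. e \<subseteq> ck_vertices m \<and> card e = 2}"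

text \<open>Four distinct points a,b,c,d alternate in the cyclic order 0,1,...,2m-1
  iff, w.r.t. the linear order of labels, exactly one of c, d lies strictly
  between a and b (alternation is invariant under cyclic rotation, so cutting
  the cycle at 0 loses nothing).\<close>
definition strictly_between :: "nat \<Rightarrow> nat \<Rightarrow> nat \<Rightarrow> bool" where
  "strictly_between a b x \<longleftrightarrow> min a b < x \<and> x < max a b"

definition edges_cross :: "nat set \<Rightarrow> nat set \<Rightarrow> bool" where
  "edges_cross e f \<longleftrightarrow> (\<exists>a b c d. e = {a, b} \<and> f = {c, d} \<and>
      distinct [a, b, c, d] \<and>
      (strictly_between a b c \<noteq> strictly_between a b d))"

definition edges_disjoint :: "nat set \<Rightarrow> nat set \<Rightarrow> bool" where
  "edges_disjoint e f \<longleftrightarrow> e \<inter> f = {} \<and> \<not> edges_cross e f"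

definition is_SPM :: "nat \<Rightarrow> nat set set \<Rightarrow> bool" where
  "is_SPM m M \<longleftrightarrow> M \<subseteq> ck_edges m \<and> card M = m \<and>
     (\<forall>e\<in>M. \<forall>f\<in>M. e \<noteq> f \<longrightarrow> edges_disjoint e f)"

definition is_blocking_set :: "nat \<Rightarrow> nat set set \<Rightarrow> bool" where
  "is_blocking_set m B \<longleftrightarrow> B \<subseteq> ck_edges m \<and> (\<forall>M. is_SPM m M \<longrightarrow> B \<inter> M \<noteq> {})"

definition is_blocker :: "nat \<Rightarrow> nat set set \<Rightarrow> bool" where
  "is_blocker m B \<longleftrightarrow> is_blocking_set m B \<and> card B = m"

end

theory Submission
  imports Defs
begin

(* Fix m >= 2.  Write  e_{k,d} = {k - d, k + 1 + d}.  Every edge of CK(2m) lies in exactly one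
   "parallel class" (edges whose endpoint sum is 2k+1 mod 2m, k < m), and each parallel class is
   an SPM; hence a blocker contains exactly one edge of each class.  The proof shows that the
   blockers are precisely the rotations of the "caterpillars"
        N(d) = { e_{k, d k} | k < m },
   where the shape d is 0 on a prefix [0, j) (a boundary path 0-1-...-j) and then strictly
   increases with d k + 2 <= m (each further edge wraps around all previous ones).

   First crossing is shown invariant under rotations and
   under order-preserving relabellings, the parallel classes are shown to be SPMs, and two
   reductions are set up: adding a boundary edge to an SPM of CK(2m-2), and deleting an
   innermost boundary edge {t, t+1} from an SPM of CK(2m).  Using the second reduction one shows
   by induction that every caterpillar is a blocker; using the first one shows that a blocker
   missing a boundary edge {2m-2, 2m-1} next to a present one {2m-3, 2m-2} is a smaller blocker
   plus that edge, which by induction and a case analysis on the position of the added edge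
   gives the converse.  Finally the parametrisation (rotation, shape) is injective, there are
   2m rotations and 2^(m-2) shapes, whence m * 2^(m-1) blockers. *)

lemma card_2_pair: "card e = 2 \<Longrightarrow> \<exists>a b. a \<noteq> b \<and> e = {a, b}"
  by (auto simp: card_2_iff)

lemma ck_edges_iff: "e \<in> ck_edges m \<longleftrightarrow> e \<subseteq> {..<2*m} \<and> card e = 2"
  by (auto simp: ck_edges_def ck_vertices_def)

lemma ck_edges_finite: "finite (ck_edges m)"
proof -
  have "ck_edges m \<subseteq> Pow {..<2*m}" using ck_edges_iff by blast
  then show ?thesis by (rule finite_subset) simp
qed

lemma strictly_between_sym: "strictly_between a b x = strictly_between b a x"
  by (auto simp: strictly_between_def)

lemma edges_cross_iff:
  assumes "a \<noteq> b" "c \<noteq> d"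
  shows "edges_cross {a,b} {c,d} \<longleftrightarrow> distinct [a,b,c,d] \<and>
     (strictly_between a b c \<noteq> strictly_between a b d)"
proof
  assume "edges_cross {a,b} {c,d}"
  then obtain a' b' c' d' where h: "{a,b} = {a',b'}" "{c,d} = {c',d'}" "distinct [a',b',c',d']"
    "strictly_between a' b' c' \<noteq> strictly_between a' b' d'"
    unfolding edges_cross_def by blast
  from h(1) have "(a = a' \<and> b = b') \<or> (a = b' \<and> b = a')" by (auto simp: doubleton_eq_iff)
  moreover from h(2) have "(c = c' \<and> d = d') \<or> (c = d' \<and> d = c')" by (auto simp: doubleton_eq_iff)
  ultimately show "distinct [a,b,c,d] \<and> (strictly_between a b c \<noteq> strictly_between a b d)"
    using h(3,4) strictly_between_sym by auto
next
  assume "distinct [a,b,c,d] \<and> (strictly_between a b c \<noteq> strictly_between a b d)"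
  then show "edges_cross {a,b} {c,d}" unfolding edges_cross_def by blast
qed

lemma not_edges_cross:
  assumes "a \<noteq> b" "c \<noteq> d" "strictly_between a b c = strictly_between a b d"
  shows "\<not> edges_cross {a,b} {c,d}"
  using edges_cross_iff[OF assms(1,2)] assms(3) by simp

lemma edges_cross_sym: "edges_cross e f = edges_cross f e"
proof -
  have "edges_cross f e" if ef: "edges_cross e f" for e f
  proof -
    obtain a b c d where h: "e = {a,b}" "f = {c,d}" "distinct [a,b,c,d]"
      "strictly_between a b c \<noteq> strictly_between a b d"
      using ef unfolding edges_cross_def by blast
    have "strictly_between c d a \<noteq> strictly_between c d b"
      using h(3,4) unfolding strictly_between_def
      by (cases "a < b"; cases "c < d"; simp add: min_def max_def; arith)
    moreover have "distinct [c,d,a,b]" using h(3) by auto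
    ultimately show ?thesis unfolding edges_cross_def using h(1,2) by blast
  qed
  then show ?thesis by blast
qed

lemma not_edges_cross_beyond:
  assumes "e \<subseteq> {..<n}" "card e = 2" "n \<le> c" "n \<le> d" "c \<noteq> d"
  shows "\<not> edges_cross e {c,d}"
proof -
  obtain a b where ab: "a \<noteq> b" "e = {a,b}" using card_2_pair[OF assms(2)] by blast
  have "strictly_between a b c = strictly_between a b d"
    using ab assms unfolding strictly_between_def by auto
  then show ?thesis using not_edges_cross[OF ab(1) assms(5)] ab(2) by simp
qed

lemma SPM_edge: "is_SPM m M \<Longrightarrow> e \<in> M \<Longrightarrow> e \<subseteq> {..<2*m} \<and> card e = 2"
  unfolding is_SPM_def ck_edges_iff[symmetric] by blast

lemma SPM_finite: "is_SPM m M \<Longrightarrow> finite M"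
  unfolding is_SPM_def using ck_edges_finite finite_subset by blast

lemma blocking_set_finite: "is_blocking_set m B \<Longrightarrow> finite B"
  unfolding is_blocking_set_def using ck_edges_finite finite_subset by blast

lemma blocker_finite: "is_blocker m B \<Longrightarrow> finite B"
  unfolding is_blocker_def using blocking_set_finite by blast

lemma blocker_edge: "is_blocker m B \<Longrightarrow> e \<in> B \<Longrightarrow> e \<subseteq> {..<2*m}"
  unfolding is_blocker_def is_blocking_set_def using ck_edges_iff by blast

text \<open>Every vertex is covered by an SPM, since its m disjoint edges have 2m endpoints.\<close>

lemma SPM_covers: "is_SPM m M \<Longrightarrow> \<Union>M = {..<2*m}"
proof -
  assume M: "is_SPM m M"
  have "card (\<Union>M) = (\<Sum>e\<in>M. card e)"
  proof (rule card_Union_disjoint)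
    show "pairwise disjnt M" unfolding pairwise_def disjnt_def
      using M by (auto simp: is_SPM_def edges_disjoint_def)
    show "\<And>e. e \<in> M \<Longrightarrow> finite e" using SPM_edge[OF M] by (metis card.infinite zero_neq_numeral)
  qed
  also have "\<dots> = 2*m" using SPM_edge[OF M] M by (simp add: is_SPM_def)
  finally show ?thesis using SPM_edge[OF M] by (intro card_subset_eq) auto
qed

lemma strict_mono_on_strictly_between:
  assumes "strict_mono_on A (f :: nat \<Rightarrow> nat)" "a \<in> A" "b \<in> A" "c \<in> A"
  shows "strictly_between (f a) (f b) (f c) = strictly_between a b c"
proof -
  note lt = strict_mono_on_less[OF assms(1)]
  show ?thesis unfolding strictly_between_def min_def max_def
    using lt[OF assms(2,3)] lt[OF assms(3,2)] lt[OF assms(2,4)] lt[OF assms(4,2)]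
      lt[OF assms(3,4)] lt[OF assms(4,3)]
    by (auto simp: not_le)
qed

lemma strict_mono_on_edges_cross:
  assumes f: "strict_mono_on A (f :: nat \<Rightarrow> nat)"
    and "e \<subseteq> A" "card e = 2" "e' \<subseteq> A" "card e' = 2"
  shows "edges_cross (f ` e) (f ` e') = edges_cross e e'"
proof -
  obtain a b where ab: "a \<noteq> b" "e = {a,b}" using card_2_pair[OF assms(3)] by blast
  obtain c d where cd: "c \<noteq> d" "e' = {c,d}" using card_2_pair[OF assms(5)] by blast
  have A: "a \<in> A" "b \<in> A" "c \<in> A" "d \<in> A" using ab cd assms by auto
  have eq: "f x = f y \<longleftrightarrow> x = y" if "x \<in> A" "y \<in> A" for x y
    using strict_mono_on_eq[OF f that] .
  have "edges_cross (f ` e) (f ` e') = edges_cross {f a, f b} {f c, f d}" using ab cd by simp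
  also have "\<dots> = (distinct [f a, f b, f c, f d] \<and>
     (strictly_between (f a) (f b) (f c) \<noteq> strictly_between (f a) (f b) (f d)))"
    by (rule edges_cross_iff) (use eq A ab(1) cd(1) in blast)+
  also have "\<dots> = (distinct [a,b,c,d] \<and> (strictly_between a b c \<noteq> strictly_between a b d))"
    using strict_mono_on_strictly_between[OF f] eq A by auto
  also have "\<dots> = edges_cross e e'" using edges_cross_iff[OF ab(1) cd(1)] ab cd by simp
  finally show ?thesis .
qed

section \<open>Rotations\<close>

definition rot :: "nat \<Rightarrow> nat \<Rightarrow> nat \<Rightarrow> nat" where
  "rot m k v = (v + k) mod (2*m)"

definition rot_edges :: "nat \<Rightarrow> nat \<Rightarrow> nat set set \<Rightarrow> nat set set" where
  "rot_edges m k B = (\<lambda>e. rot m k ` e) ` B"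

lemma rot_lt: "0 < m \<Longrightarrow> rot m k v < 2*m"
  unfolding rot_def by simp

lemma rot_add: "rot m a (rot m b v) = rot m (a + b) v"
  unfolding rot_def by (simp add: mod_add_left_eq add.assoc add.commute[of a b])

lemma rot_mod: "rot m (k mod (2*m)) v = rot m k v"
  unfolding rot_def by (simp add: mod_add_right_eq)

lemma rot_inverse: "v < 2*m \<Longrightarrow> rot m (2*m - k mod (2*m)) (rot m k v) = v"
proof -
  assume v: "v < 2*m"
  have "2*m - k mod (2*m) + k = 2*m + (k - k mod (2*m))"
    using mod_le_divisor[of "2*m" k] v by (cases "m = 0") (auto simp: mod_less_eq_dividend)
  also have "\<dots> = 2*m * Suc (k div (2*m))" by (simp add: minus_mod_eq_mult_div)
  finally show ?thesis unfolding rot_add unfolding rot_def using v by (simp only: mod_mult_self2) simp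
qed

lemma rot_inj: "inj_on (rot m k) {..<2*m}"
  by (rule inj_on_inverseI[where g = "rot m (2*m - k mod (2*m))"]) (simp add: rot_inverse)

lemma rot_card: "e \<subseteq> {..<2*m} \<Longrightarrow> card (rot m k ` e) = card e"
  using rot_inj inj_on_subset card_image by blast

lemma rot_image_eq_iff:
  "e \<subseteq> {..<2*m} \<Longrightarrow> f \<subseteq> {..<2*m} \<Longrightarrow> rot m k ` e = rot m k ` f \<longleftrightarrow> e = f"
  by (rule inj_on_image_eq_iff[OF rot_inj])

lemma strictly_between_Suc: "strictly_between (Suc a) (Suc b) (Suc c) = strictly_between a b c"
  by (auto simp: strictly_between_def)

text \<open>Rotation by one step moves the last vertex 2m-1 to 0 and shifts all others up, which
  does not change which of two points lies between two others relative to alternation.\<close>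

lemma rot1_alternation:
  assumes "distinct [a,b,c,d]" "a < 2*m" "b < 2*m" "c < 2*m" "d < 2*m"
  shows "(strictly_between (rot m 1 a) (rot m 1 b) (rot m 1 c) \<noteq>
          strictly_between (rot m 1 a) (rot m 1 b) (rot m 1 d))
     = (strictly_between a b c \<noteq> strictly_between a b d)"
proof -
  have r: "\<And>v. v < 2*m \<Longrightarrow> rot m 1 v = (if v = 2*m - 1 then 0 else Suc v)"
    unfolding rot_def by (auto simp: mod_if)
  let ?n = "2*m - 1"
  consider "a = ?n" | "b = ?n" | "c = ?n" | "d = ?n" | "a \<noteq> ?n" "b \<noteq> ?n" "c \<noteq> ?n" "d \<noteq> ?n" by blast
  then show ?thesis
  proof cases
    case 1
    then have "b \<noteq> ?n" "c \<noteq> ?n" "d \<noteq> ?n" using assms(1) by auto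
    then show ?thesis using 1 assms unfolding r[OF assms(2)] r[OF assms(3)] r[OF assms(4)] r[OF assms(5)]
      by (simp add: strictly_between_def) linarith
  next
    case 2
    then have "a \<noteq> ?n" "c \<noteq> ?n" "d \<noteq> ?n" using assms(1) by auto
    then show ?thesis using 2 assms unfolding r[OF assms(2)] r[OF assms(3)] r[OF assms(4)] r[OF assms(5)]
      by (simp add: strictly_between_def) linarith
  next
    case 3
    then have "a \<noteq> ?n" "b \<noteq> ?n" "d \<noteq> ?n" using assms(1) by auto
    then show ?thesis using 3 assms unfolding r[OF assms(2)] r[OF assms(3)] r[OF assms(4)] r[OF assms(5)]
      by (simp add: strictly_between_def) linarith
  next
    case 4
    then have "a \<noteq> ?n" "b \<noteq> ?n" "c \<noteq> ?n" using assms(1) by auto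
    then show ?thesis using 4 assms unfolding r[OF assms(2)] r[OF assms(3)] r[OF assms(4)] r[OF assms(5)]
      by (simp add: strictly_between_def) linarith
  next
    case 5
    then show ?thesis using assms unfolding r[OF assms(2)] r[OF assms(3)] r[OF assms(4)] r[OF assms(5)]
      by (simp add: strictly_between_Suc)
  qed
qed

lemma rot1_edges_cross:
  assumes "e \<subseteq> {..<2*m}" "card e = 2" "f \<subseteq> {..<2*m}" "card f = 2"
  shows "edges_cross (rot m 1 ` e) (rot m 1 ` f) = edges_cross e f"
proof -
  obtain a b where ab: "a \<noteq> b" "e = {a,b}" using card_2_pair[OF assms(2)] by blast
  obtain c d where cd: "c \<noteq> d" "f = {c,d}" using card_2_pair[OF assms(4)] by blast
  have lt: "a < 2*m" "b < 2*m" "c < 2*m" "d < 2*m" using assms ab cd by auto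
  have inj: "\<And>x y. x < 2*m \<Longrightarrow> y < 2*m \<Longrightarrow> rot m 1 x = rot m 1 y \<longleftrightarrow> x = y"
    using rot_inj[of m 1] by (auto dest: inj_onD)
  have "distinct [rot m 1 a, rot m 1 b, rot m 1 c, rot m 1 d] = distinct [a,b,c,d]"
    using lt inj by auto
  then show ?thesis
    unfolding ab cd image_insert image_empty
    using edges_cross_iff[OF ab(1) cd(1)]
      edges_cross_iff[of "rot m 1 a" "rot m 1 b" "rot m 1 c" "rot m 1 d"]
      rot1_alternation[OF _ lt] inj lt ab(1) cd(1)
    by auto
qed

lemma rot_edges_cross:
  assumes "e \<subseteq> {..<2*m}" "card e = 2" "f \<subseteq> {..<2*m}" "card f = 2" "0 < m"
  shows "edges_cross (rot m k ` e) (rot m k ` f) = edges_cross e f"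
proof (induction k)
  case 0
  have "rot m 0 ` g = g" if "g \<subseteq> {..<2*m}" for g
    using that by (force simp: rot_def)
  then show ?case using assms by simp
next
  case (Suc k)
  have i: "rot m (Suc k) ` g = rot m 1 ` (rot m k ` g)" for g
    unfolding image_image rot_add by simp
  have "rot m k ` e \<subseteq> {..<2*m}" "rot m k ` f \<subseteq> {..<2*m}" using rot_lt assms(5) by blast+
  moreover have "card (rot m k ` e) = 2" "card (rot m k ` f) = 2" using rot_card assms by metis+
  ultimately show ?case unfolding i using rot1_edges_cross Suc.IH by simp
qed

lemma rot_edges_add: "rot_edges m a (rot_edges m b M) = rot_edges m (a + b) M"
  unfolding rot_edges_def image_image by (simp add: rot_add)

lemma rot_edges_mod: "rot_edges m (k mod (2*m)) B = rot_edges m k B"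
  unfolding rot_edges_def using rot_mod by simp

lemma rot_edges_insert: "rot_edges m k (insert g X) = insert (rot m k ` g) (rot_edges m k X)"
  unfolding rot_edges_def by simp

lemma rot_edges_inverse:
  assumes "\<forall>e\<in>M. e \<subseteq> {..<2*m}"
  shows "rot_edges m (2*m - k mod (2*m)) (rot_edges m k M) = M"
proof -
  have "rot m (2*m - k mod (2*m)) ` rot m k ` e = e" if "e \<in> M" for e
  proof -
    have "rot m (2*m - k mod (2*m)) ` rot m k ` e = id ` e"
      unfolding image_image
    proof (rule image_cong)
      fix v assume "v \<in> e"
      then have "v < 2*m" using assms that by auto
      then show "rot m (2*m - k mod (2*m)) (rot m k v) = id v" by (simp add: rot_inverse)
    qed simp
    then show ?thesis by simp
  qed
  then show ?thesis unfolding rot_edges_def image_image by simp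
qed

lemma rot_edges_0: "\<forall>e\<in>X. e \<subseteq> {..<2*m} \<Longrightarrow> rot_edges m 0 X = X"
proof -
  assume X: "\<forall>e\<in>X. e \<subseteq> {..<2*m}"
  have "rot m 0 ` e = e" if "e \<in> X" for e
    using X that by (force simp: rot_def)
  then show ?thesis unfolding rot_edges_def by simp
qed

lemma rot_ck_edge:
  assumes "0 < m" "e \<in> ck_edges m" shows "rot m k ` e \<in> ck_edges m"
proof -
  have "rot m k ` e \<subseteq> {..<2*m}" using rot_lt[OF assms(1)] by blast
  then show ?thesis using rot_card assms(2) unfolding ck_edges_iff by simp
qed

lemma rot_edges_card: "\<forall>e\<in>B. e \<subseteq> {..<2*m} \<Longrightarrow> card (rot_edges m k B) = card B"
  unfolding rot_edges_def by (rule card_image) (auto intro!: inj_onI simp: rot_image_eq_iff)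

lemma rot_SPM:
  assumes m: "0 < m" and M: "is_SPM m M"
  shows "is_SPM m (rot_edges m k M)"
proof -
  have "card (rot_edges m k M) = m" using rot_edges_card SPM_edge[OF M] M by (simp add: is_SPM_def)
  moreover have "rot_edges m k M \<subseteq> ck_edges m"
    unfolding rot_edges_def using M rot_ck_edge[OF m] by (auto simp: is_SPM_def)
  moreover have "edges_disjoint (rot m k ` e) (rot m k ` f)" if "e \<in> M" "f \<in> M" "e \<noteq> f" for e f
  proof -
    have dj: "edges_disjoint e f" using M that by (auto simp: is_SPM_def)
    have E: "e \<subseteq> {..<2*m}" "card e = 2" "f \<subseteq> {..<2*m}" "card f = 2"
      using SPM_edge[OF M] that by auto
    have "rot m k ` e \<inter> rot m k ` f = {}"
      using dj inj_on_image_Int[OF rot_inj E(1,3)] by (simp add: edges_disjoint_def)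
    then show ?thesis using rot_edges_cross[OF E m] dj by (simp add: edges_disjoint_def)
  qed
  ultimately show ?thesis unfolding is_SPM_def rot_edges_def by auto
qed

lemma rot_blocker:
  assumes m: "0 < m" and B: "is_blocker m B"
  shows "is_blocker m (rot_edges m k B)"
proof -
  have "card (rot_edges m k B) = m"
    using rot_edges_card blocker_edge[OF B] B by (simp add: is_blocker_def)
  moreover have "rot_edges m k B \<subseteq> ck_edges m"
    unfolding rot_edges_def using B rot_ck_edge[OF m]
    by (auto simp: is_blocker_def is_blocking_set_def)
  moreover have "rot_edges m k B \<inter> M \<noteq> {}" if M: "is_SPM m M" for M
  proof -
    let ?k' = "2*m - k mod (2*m)"
    have "is_SPM m (rot_edges m ?k' M)" by (rule rot_SPM[OF m M])
    then obtain e where e: "e \<in> B" "e \<in> rot_edges m ?k' M"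
      using B by (auto simp: is_blocker_def is_blocking_set_def)
    have "rot_edges m k (rot_edges m ?k' M) = rot_edges m ?k' (rot_edges m k M)"
      by (simp add: rot_edges_add add.commute)
    also have "\<dots> = M" by (rule rot_edges_inverse) (use SPM_edge[OF M] in blast)
    finally have "rot_edges m k (rot_edges m ?k' M) = M" .
    then have "rot m k ` e \<in> M" using e(2) unfolding rot_edges_def by auto
    then show ?thesis using e(1) unfolding rot_edges_def by auto
  qed
  ultimately show ?thesis by (simp add: is_blocker_def is_blocking_set_def)
qed

section \<open>Parallel classes\<close>

text \<open>The edges whose endpoint sum is 2k+1 modulo 2m form the parallel class of k; the
  edge at distance d from the boundary edge {k, k+1} is  class_edge m k d.\<close>

definition class_edge :: "nat \<Rightarrow> nat \<Rightarrow> nat \<Rightarrow> nat set" where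
  "class_edge m k d = {(k + 2*m - d) mod (2*m), (k + 1 + d) mod (2*m)}"

definition par_class :: "nat \<Rightarrow> nat \<Rightarrow> nat set set" where
  "par_class m k = class_edge m k ` {..<m}"

text \<open>The two endpoints of class_edge m k d are distinct because their difference 2m-1-2d is
  not a multiple of 2m.\<close>

lemma mod_add_ne:
  assumes "0 < c" "c < n" shows "(x + c) mod n \<noteq> x mod (n::nat)"
proof
  assume "(x + c) mod n = x mod n"
  then have "n dvd (x + c - x)" using mod_eq_dvd_iff_nat[of x "x + c" n] by simp
  then have "n dvd c" by simp
  then show False using assms by (meson dvd_imp_le not_less)
qed

lemma class_edge_ne:
  fixes m k d :: nat
  assumes "d < m" shows "(k + 2*m - d) mod (2*m) \<noteq> (k + 1 + d) mod (2*m)"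
proof -
  have "k + 2*m - d = (k + 1 + d) + (2*m - 1 - 2*d)" using assms by simp
  then show ?thesis using mod_add_ne[of "2*m - 1 - 2*d" "2*m" "k+1+d"] assms by simp
qed

lemma class_edge_card: "d < m \<Longrightarrow> card (class_edge m k d) = 2"
  unfolding class_edge_def using class_edge_ne by simp

lemma class_edge_sub: "d < m \<Longrightarrow> class_edge m k d \<subseteq> {..<2*m}"
  unfolding class_edge_def by simp

lemma class_edge_ck: "d < m \<Longrightarrow> class_edge m k d \<in> ck_edges m"
  unfolding ck_edges_iff using class_edge_card class_edge_sub by simp

lemma class_edge_sum:
  fixes m k d :: nat
  assumes "d < m" "k < m"
  shows "(\<Sum>(class_edge m k d)) mod (2*m) = 2*k + 1"
proof -
  have "(\<Sum>(class_edge m k d)) = (k + 2*m - d) mod (2*m) + (k + 1 + d) mod (2*m)"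
    unfolding class_edge_def using class_edge_ne[OF assms(1)] by simp
  then have "(\<Sum>(class_edge m k d)) mod (2*m) = ((k + 2*m - d) + (k + 1 + d)) mod (2*m)"
    by (simp add: mod_add_eq)
  also have "(k + 2*m - d) + (k + 1 + d) = (2*k + 1) + 2*m" using assms by simp
  also have "((2*k + 1) + 2*m) mod (2*m) = (2*k+1) mod (2*m)" by (rule mod_add_self2)
  also have "(2*k+1) mod (2*m) = 2*k+1" using assms by simp
  finally show ?thesis .
qed

lemma class_edge0: "d < m \<Longrightarrow> class_edge m 0 d = (if d = 0 then {0, 1} else {2*m - d, d + 1})"
  unfolding class_edge_def by auto

lemma rot_class_edge: "d < m \<Longrightarrow> rot m k ` class_edge m 0 d = class_edge m k d"
proof -
  assume d: "d < m"
  have "((2*m - d) mod (2*m) + k) mod (2*m) = ((2*m - d) + k) mod (2*m)" by (rule mod_add_left_eq)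
  moreover have "(2*m-d)+k = k + 2*m - d" using d by simp
  ultimately have 1: "rot m k ((0 + 2*m - d) mod (2*m)) = (k + 2*m - d) mod (2*m)"
    unfolding rot_def by simp
  have "((0 + 1 + d) mod (2*m) + k) mod (2*m) = ((0 + 1 + d) + k) mod (2*m)" by (rule mod_add_left_eq)
  then have 2: "rot m k ((0 + 1 + d) mod (2*m)) = (k + 1 + d) mod (2*m)"
    unfolding rot_def by (simp add: add.commute add.left_commute)
  show ?thesis unfolding class_edge_def using 1 2 by simp
qed

lemma class_edge0_inj: "inj_on (class_edge m 0) {..<m}"
proof (rule inj_onI)
  fix d d' assume h: "d \<in> {..<m}" "d' \<in> {..<m}" "class_edge m 0 d = class_edge m 0 d'"
  have "d + 1 \<in> class_edge m 0 d" using h(1) class_edge0[of d m] by auto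
  then have "d + 1 \<in> class_edge m 0 d'" using h(3) by simp
  then show "d = d'" using h(1,2) class_edge0[of d' m] by (cases "d' = 0") auto
qed

text \<open>The parallel class of 0 consists of {0, 1} and the nested edges {2m-d, d+1}; it is an SPM,
  and so is every parallel class, being a rotation of it.\<close>

lemma class_edge0_disjoint:
  assumes "d < m" "d' < m" "d \<noteq> d'"
  shows "edges_disjoint (class_edge m 0 d) (class_edge m 0 d')"
proof -
  have i: "class_edge m 0 d \<inter> class_edge m 0 d' = {}"
  proof (cases "d = 0")
    case True then show ?thesis using assms class_edge0[of d m] class_edge0[of d' m] by auto
  next
    case False then show ?thesis using assms class_edge0[of d m] class_edge0[of d' m] by (cases "d' = 0") auto
  qed
  have nc: "\<not> edges_cross (class_edge m 0 d) (class_edge m 0 d')"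
  proof (cases "d = 0")
    case True
    have "\<not> edges_cross {0, 1} {2*m-d', d'+1}"
    proof (rule not_edges_cross)
      show "(0::nat) \<noteq> 1" "2*m-d' \<noteq> d'+1" using assms by arith+
      show "strictly_between 0 1 (2*m-d') = strictly_between 0 1 (d'+1)"
        unfolding strictly_between_def by simp
    qed
    then show ?thesis using assms True class_edge0[of d m] class_edge0[of d' m] by simp
  next
    case False
    note F = this
    show ?thesis
    proof (cases "d' = 0")
      case True
      have "\<not> edges_cross {2*m-d, d+1} {0, 1}"
      proof (rule not_edges_cross)
        show "(0::nat) \<noteq> 1" "2*m-d \<noteq> d+1" using assms by arith+
        show "strictly_between (2*m-d) (d+1) 0 = strictly_between (2*m-d) (d+1) 1"
          unfolding strictly_between_def using F assms by (simp add: min_def max_def)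
      qed
      then show ?thesis using assms True F class_edge0[of d m] class_edge0[of d' m] by simp
    next
      case False
      have "\<not> edges_cross {2*m-d, d+1} {2*m-d', d'+1}"
      proof (rule not_edges_cross)
        show "2*m-d \<noteq> d+1" "2*m-d' \<noteq> d'+1" using assms by arith+
        show "strictly_between (2*m-d) (d+1) (2*m-d') = strictly_between (2*m-d) (d+1) (d'+1)"
          unfolding strictly_between_def using assms by (simp add: min_def max_def) arith
      qed
      then show ?thesis using assms F False class_edge0[of d m] class_edge0[of d' m] by simp
    qed
  qed
  show ?thesis using i nc by (simp add: edges_disjoint_def)
qed

lemma par_class0_SPM:
  assumes "0 < m" shows "is_SPM m (par_class m 0)"
proof -
  have "card (par_class m 0) = m" unfolding par_class_def using card_image[OF class_edge0_inj] by simp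
  moreover have "par_class m 0 \<subseteq> ck_edges m" unfolding par_class_def using class_edge_ck by auto
  ultimately show ?thesis unfolding is_SPM_def par_class_def using class_edge0_disjoint by auto
qed

lemma par_class_rot: "par_class m k = rot_edges m k (par_class m 0)"
  unfolding par_class_def rot_edges_def image_image using rot_class_edge by auto

lemma par_class_SPM: "0 < m \<Longrightarrow> is_SPM m (par_class m k)"
  using par_class_rot rot_SPM par_class0_SPM by metis

lemma par_class_sum: "k < m \<Longrightarrow> e \<in> par_class m k \<Longrightarrow> (\<Sum>e) mod (2*m) = 2*k+1"
  unfolding par_class_def using class_edge_sum by auto

text \<open>A blocking set meets each of the m parallel classes in a different edge, hence has at
  least m edges.\<close>

lemma blocking_lower:
  assumes "0 < m" "is_blocking_set m B"
  shows "m \<le> card B"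
proof -
  have "\<forall>k<m. \<exists>e. e \<in> B \<inter> par_class m k" using assms par_class_SPM unfolding is_blocking_set_def by blast
  then obtain g where g: "\<forall>k<m. g k \<in> B \<inter> par_class m k" by metis
  have inj: "inj_on g {..<m}"
  proof (rule inj_onI)
    fix x y assume "x \<in> {..<m}" "y \<in> {..<m}" "g x = g y"
    then have "2*x+1 = 2*y+1" using g par_class_sum by (metis IntD2 lessThan_iff)
    then show "x = y" by simp
  qed
  have "g ` {..<m} \<subseteq> B" using g by auto
  then have "card (g ` {..<m}) \<le> card B" using blocking_set_finite[OF assms(2)] card_mono by blast
  then show ?thesis using card_image[OF inj] by simp
qed

lemma two_times_pred: "2*(m-1) = 2*m - (2::nat)"
  by (simp add: right_diff_distrib')

lemma SPM_extend:
  assumes "0 < m" "is_SPM (m-1) M"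
  shows "is_SPM m (insert {2*m-2, 2*m-1} M)"
proof -
  let ?f = "{2*m-2, 2*m-1}"
  have ME: "\<forall>e\<in>M. e \<subseteq> {..<2*m-2} \<and> card e = 2"
    using SPM_edge[OF assms(2)] unfolding two_times_pred by blast
  have fck: "?f \<in> ck_edges m" unfolding ck_edges_iff using assms(1) by auto
  have Mck: "M \<subseteq> ck_edges m"
  proof
    fix e assume "e \<in> M"
    then have "e \<subseteq> {..<2*m-2}" "card e = 2" using ME by auto
    then have "e \<subseteq> {..<2*m}" "card e = 2" by auto
    then show "e \<in> ck_edges m" unfolding ck_edges_iff by simp
  qed
  have fM: "?f \<notin> M" using ME by auto
  have fin: "finite M" by (rule SPM_finite[OF assms(2)])
  have c: "card (insert ?f M) = m" using fM fin assms by (simp add: is_SPM_def)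
  have dj: "edges_disjoint e ?f" "edges_disjoint ?f e" if "e \<in> M" for e
  proof -
    have "e \<subseteq> {..<2*m-2}" using ME that by auto
    then have "e \<inter> ?f = {}" using assms(1) by auto
    moreover have "\<not> edges_cross e ?f"
      by (rule not_edges_cross_beyond[of e "2*m-2"]) (use ME that assms(1) in auto)
    ultimately show "edges_disjoint e ?f" "edges_disjoint ?f e"
      by (auto simp: edges_disjoint_def edges_cross_sym)
  qed
  have "\<forall>e\<in>insert ?f M. \<forall>f\<in>insert ?f M. e \<noteq> f \<longrightarrow> edges_disjoint e f"
    using dj assms(2) by (auto simp: is_SPM_def)
  then show ?thesis using c fck Mck by (simp add: is_SPM_def)
qed

lemma reduce_blocking:
  assumes "0 < m" "is_blocking_set m B" "{2*m-2, 2*m-1} \<notin> B"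
  shows "is_blocking_set (m-1) {e\<in>B. e \<subseteq> {..<2*m-2}}"
proof -
  have Bck: "B \<subseteq> ck_edges m" using assms(2) by (simp add: is_blocking_set_def)
  have "{e\<in>B. e \<subseteq> {..<2*m-2}} \<subseteq> ck_edges (m-1)"
  proof
    fix e assume "e \<in> {e\<in>B. e \<subseteq> {..<2*m-2}}"
    then have "e \<subseteq> {..<2*(m-1)}" "card e = 2" using Bck ck_edges_iff unfolding two_times_pred by auto
    then show "e \<in> ck_edges (m-1)" unfolding ck_edges_iff by simp
  qed
  moreover have "{e\<in>B. e \<subseteq> {..<2*m-2}} \<inter> M \<noteq> {}" if "is_SPM (m-1) M" for M
  proof -
    have "is_SPM m (insert {2*m-2, 2*m-1} M)" by (rule SPM_extend[OF assms(1) that])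
    then obtain e where e: "e \<in> B" "e \<in> insert {2*m-2, 2*m-1} M"
      using assms(2) unfolding is_blocking_set_def by blast
    then have "e \<in> M" using assms(3) by auto
    moreover have "e \<subseteq> {..<2*m-2}" using SPM_edge[OF that \<open>e \<in> M\<close>] unfolding two_times_pred by blast
    ultimately show ?thesis using e by blast
  qed
  ultimately show ?thesis unfolding is_blocking_set_def by blast
qed

lemma blocker_missing_last_boundary:
  assumes m: "2 \<le> m" and B: "is_blocker m B" and nb: "{2*m-2, 2*m-1} \<notin> B"
  shows "m - 1 \<le> card {e\<in>B. e \<subseteq> {..<2*m-2}}"
proof -
  have "is_blocking_set (m-1) {e\<in>B. e \<subseteq> {..<2*m-2}}"
    by (rule reduce_blocking[OF _ _ nb]) (use m B in \<open>simp_all add: is_blocker_def\<close>)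
  then show ?thesis using blocking_lower[of "m-1"] m by simp
qed

text \<open>Consequently, if a boundary edge {v, v+1} is missing from a blocker, at most one edge of
  the blocker touches {v, v+1}: after rotating v to 2m-2, m-1 of the m edges lie below 2m-2.\<close>

lemma blocker_boundary_gap:
  assumes m: "2 \<le> m" and B: "is_blocker m B" and v: "Suc v < 2*m" and nb: "{v, Suc v} \<notin> B"
    and e: "e1 \<in> B" "e2 \<in> B" "e1 \<inter> {v, Suc v} \<noteq> {}" "e2 \<inter> {v, Suc v} \<noteq> {}"
  shows "e1 = e2"
proof (rule ccontr)
  assume ne: "e1 \<noteq> e2"
  let ?r = "2*m - 2 - v"
  let ?B = "rot_edges m ?r B"
  have B': "is_blocker m ?B" by (rule rot_blocker) (use m B in auto)
  have Bsub: "\<forall>e\<in>B. e \<subseteq> {..<2*m}" using blocker_edge[OF B] by blast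
  have rv: "rot m ?r v = 2*m-2" "rot m ?r (Suc v) = 2*m-1" unfolding rot_def using v by auto
  have nb': "{2*m-2, 2*m-1} \<notin> ?B"
  proof
    assume "{2*m-2, 2*m-1} \<in> ?B"
    then obtain e where "e \<in> B" "rot m ?r ` e = rot m ?r ` {v, Suc v}"
      unfolding rot_edges_def using rv by auto
    moreover have "{v, Suc v} \<subseteq> {..<2*m}" using v by auto
    ultimately have "e = {v, Suc v}" using Bsub rot_image_eq_iff[of e m "{v, Suc v}" ?r] by simp
    then show False using nb \<open>e \<in> B\<close> by simp
  qed
  let ?R = "{e\<in>?B. e \<subseteq> {..<2*m-2}}"
  have out: "\<not> rot m ?r ` e \<subseteq> {..<2*m-2}" if H: "e \<inter> {v, Suc v} \<noteq> {}" for e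
  proof -
    obtain y where "y \<in> e" "y = v \<or> y = Suc v" using H by auto
    then have "rot m ?r y \<in> rot m ?r ` e" "2*m-2 \<le> rot m ?r y" using rv by auto
    then show ?thesis by auto
  qed
  have ne': "rot m ?r ` e1 \<noteq> rot m ?r ` e2"
    using ne e(1,2) Bsub rot_image_eq_iff[of e1 m e2 ?r] by simp
  have in': "rot m ?r ` e1 \<in> ?B" "rot m ?r ` e2 \<in> ?B" using e unfolding rot_edges_def by auto
  have "?R \<subseteq> ?B - {rot m ?r ` e1, rot m ?r ` e2}" using out e by auto
  then have "card ?R \<le> card (?B - {rot m ?r ` e1, rot m ?r ` e2})"
    using blocker_finite[OF B'] by (simp add: card_mono)
  also have "\<dots> = m - 2"
    using in' ne' blocker_finite[OF B'] B' by (simp add: card_Diff_subset is_blocker_def)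
  finally show False using blocker_missing_last_boundary[OF m B' nb'] m by simp
qed

lemma blocker_remove_end:
  assumes m: "2 \<le> m" and B: "is_blocker m B" and g: "{2*m-3, 2*m-2} \<in> B"
    and nb: "{2*m-2, 2*m-1} \<notin> B"
  shows "is_blocker (m-1) (B - {{2*m-3, 2*m-2}})" "\<forall>e \<in> B - {{2*m-3, 2*m-2}}. e \<subseteq> {..<2*m-2}"
proof -
  let ?g = "{2*m-3, 2*m-2}"
  let ?R = "{e\<in>B. e \<subseteq> {..<2*m-2}}"
  have fin: "finite B" using blocker_finite[OF B] .
  have sub: "?R \<subseteq> B - {?g}" using m by auto
  have cB: "card (B - {?g}) = m - 1" using B g fin by (simp add: is_blocker_def)
  have eq: "?R = B - {?g}"
    using card_subset_eq[OF _ sub] card_mono[OF _ sub] fin cB blocker_missing_last_boundary[OF m B nb]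
    by simp
  have "is_blocking_set (m-1) ?R"
    by (rule reduce_blocking[OF _ _ nb]) (use m B in \<open>simp_all add: is_blocker_def\<close>)
  then show "is_blocker (m-1) (B - {?g})" using eq cB by (simp add: is_blocker_def)
  show "\<forall>e \<in> B - {?g}. e \<subseteq> {..<2*m-2}" using eq by blast
qed

text \<open>In an SPM, the vertex right after the left end of a non-boundary edge {a, b} is matched
  strictly inside (a, b), since its partner may not cross {a, b}.\<close>

lemma SPM_nested_edge:
  assumes M: "is_SPM m M" and ab: "{a, b} \<in> M" "Suc a < b"
  shows "\<exists>c. {Suc a, c} \<in> M \<and> a < c \<and> c < b"
proof -
  have b2: "b < 2*m" using SPM_edge[OF M ab(1)] by auto
  then have "Suc a \<in> \<Union>M" using SPM_covers[OF M] ab(2) by simp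
  then obtain e' where e': "e' \<in> M" "Suc a \<in> e'" by blast
  obtain c where c: "c \<noteq> Suc a" "e' = {Suc a, c}"
    using card_2_pair SPM_edge[OF M e'(1)] e'(2) by (metis insert_commute insert_iff singletonD)
  have "e' \<noteq> {a, b}" using e' ab by auto
  then have dj: "edges_disjoint {a, b} e'" using M ab(1) e'(1) by (auto simp: is_SPM_def)
  have "c \<noteq> a" "c \<noteq> b" using dj c by (auto simp: edges_disjoint_def)
  have ncr: "\<not> edges_cross {a,b} {Suc a, c}" using dj c by (simp add: edges_disjoint_def)
  have "a < c \<and> c < b"
  proof (rule ccontr)
    assume "\<not> (a < c \<and> c < b)"
    then have "strictly_between a b (Suc a) \<noteq> strictly_between a b c"
      using ab(2) \<open>c \<noteq> a\<close> \<open>c \<noteq> b\<close> by (auto simp: strictly_between_def)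
    moreover have "distinct [a, b, Suc a, c]" using ab(2) c \<open>c \<noteq> a\<close> \<open>c \<noteq> b\<close> by auto
    ultimately show False using ncr edges_cross_iff[of a b "Suc a" c] ab(2) c(1) by auto
  qed
  then show ?thesis using c e' by blast
qed

text \<open>Hence an edge of minimal length in an SPM is a boundary edge {t, t+1}.\<close>

lemma SPM_innermost:
  assumes M: "is_SPM m M" and m: "0 < m"
  shows "\<exists>t. Suc t < 2*m \<and> {t, Suc t} \<in> M"
proof -
  define len where "len e = Max e - Min e" for e :: "nat set"
  have ne: "M \<noteq> {}" using M m by (auto simp: is_SPM_def)
  have fin: "finite M" using SPM_finite[OF M] .
  have "Min (len ` M) \<in> len ` M" using fin ne by simp
  then obtain e where "e \<in> M" "len e = Min (len ` M)" by auto
  then have e: "e \<in> M" "\<forall>e'\<in>M. len e \<le> len e'" using fin by auto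
  obtain a b where ab: "a < b" "e = {a,b}"
    using card_2_pair SPM_edge[OF M e(1)] by (metis doubleton_eq_iff linorder_neqE_nat)
  have b2: "b < 2*m" using SPM_edge[OF M e(1)] ab by auto
  show ?thesis
  proof (cases "b = Suc a")
    case True then show ?thesis using e ab b2 by blast
  next
    case False
    then have "Suc a < b" using ab(1) by simp
    then obtain c where c: "{Suc a, c} \<in> M" "a < c" "c < b"
      using SPM_nested_edge[OF M, of a b] e(1) ab(2) by blast
    then have "len {Suc a, c} < len e" unfolding len_def ab(2) using ab(1) by (auto simp: max_def min_def)
    then show ?thesis using e(2) c(1) by (meson leD)
  qed
qed

text \<open>Deleting the vertices t and t+1 renumbers the remaining vertices by  squeeze t;
  lift t is the inverse renumbering.\<close>

definition squeeze :: "nat \<Rightarrow> nat \<Rightarrow> nat" where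
  "squeeze t v = (if v < t then v else v - 2)"

definition lift :: "nat \<Rightarrow> nat \<Rightarrow> nat" where
  "lift t v = (if v < t then v else v + 2)"

lemma lift_squeeze: "v \<noteq> t \<Longrightarrow> v \<noteq> Suc t \<Longrightarrow> lift t (squeeze t v) = v"
  unfolding lift_def squeeze_def by auto

lemma lift_notin: "lift t v \<noteq> t" "lift t v \<noteq> Suc t"
  unfolding lift_def by auto

lemma lift_less: "v < t \<Longrightarrow> lift t v = v" "t \<le> v \<Longrightarrow> lift t v = v + 2"
  unfolding lift_def by auto

lemma squeeze_strict_mono: "strict_mono_on (- {t, Suc t}) (squeeze t)"
  unfolding squeeze_def by (rule strict_mono_onI) auto

lemma squeeze_ck_edge:
  assumes "e \<subseteq> {..<2*m} - {t, Suc t}" "card e = 2" "Suc t < 2*m"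
  shows "squeeze t ` e \<in> ck_edges (m-1)"
proof -
  have "inj_on (squeeze t) e"
    using strict_mono_on_imp_inj_on[OF squeeze_strict_mono] by (rule inj_on_subset) (use assms(1) in blast)
  then have "card (squeeze t ` e) = 2" using assms(2) by (simp add: card_image)
  moreover have "squeeze t x < 2*(m-1)" if "x \<in> e" for x
    using that assms(1,3) unfolding squeeze_def two_times_pred by auto
  ultimately show ?thesis unfolding ck_edges_iff by auto
qed

lemma squeeze_edges_disjoint:
  assumes s: "e1 \<subseteq> - {t, Suc t}" "e2 \<subseteq> - {t, Suc t}" and c: "card e1 = 2" "card e2 = 2"
    and d: "edges_disjoint e1 e2"
  shows "edges_disjoint (squeeze t ` e1) (squeeze t ` e2)"
proof -
  have "squeeze t ` e1 \<inter> squeeze t ` e2 = {}"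
    using d inj_on_image_Int[OF strict_mono_on_imp_inj_on[OF squeeze_strict_mono] s]
    by (simp add: edges_disjoint_def)
  then show ?thesis
    using d strict_mono_on_edges_cross[OF squeeze_strict_mono s(1) c(1) s(2) c(2)]
    by (simp add: edges_disjoint_def)
qed

lemma SPM_delete_boundary_edge:
  assumes M: "is_SPM m M" and f: "{t, Suc t} \<in> M" and t: "Suc t < 2*m"
  shows "is_SPM (m-1) ((\<lambda>e. squeeze t ` e) ` (M - {{t, Suc t}}))"
    and "\<forall>e \<in> M - {{t, Suc t}}. lift t ` squeeze t ` e = e"
proof -
  let ?f = "{t, Suc t}"
  let ?M' = "(\<lambda>e. squeeze t ` e) ` (M - {?f})"
  have away: "e \<subseteq> - ?f" "e \<subseteq> {..<2*m}" "card e = 2" if "e \<in> M - {?f}" for e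
  proof -
    have "edges_disjoint e ?f" using M f that by (auto simp: is_SPM_def)
    then show "e \<subseteq> - ?f" by (auto simp: edges_disjoint_def)
    show "e \<subseteq> {..<2*m}" "card e = 2" using SPM_edge[OF M] that by auto
  qed
  show "\<forall>e \<in> M - {?f}. lift t ` squeeze t ` e = e"
  proof
    fix e assume "e \<in> M - {?f}"
    then have "\<forall>x\<in>e. lift t (squeeze t x) = x" using away(1) lift_squeeze by blast
    then have "lift t ` squeeze t ` e = id ` e" unfolding image_image by (intro image_cong) auto
    then show "lift t ` squeeze t ` e = e" by simp
  qed
  have "inj_on (\<lambda>e. squeeze t ` e) (M - {?f})"
    by (rule inj_onI)
      (use inj_on_image_eq_iff[OF strict_mono_on_imp_inj_on[OF squeeze_strict_mono] away(1) away(1)] in blast)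
  then have "card ?M' = m - 1"
    using card_image[of "\<lambda>e. squeeze t ` e" "M - {?f}"] M f SPM_finite[OF M] by (simp add: is_SPM_def)
  moreover have "?M' \<subseteq> ck_edges (m-1)"
  proof
    fix e' assume "e' \<in> ?M'"
    then obtain e where e: "e \<in> M - {?f}" "e' = squeeze t ` e" by blast
    have "e \<subseteq> {..<2*m} - ?f" using away(1,2)[OF e(1)] by blast
    then show "e' \<in> ck_edges (m-1)" using squeeze_ck_edge[of e m t] away(3)[OF e(1)] t e(2) by simp
  qed
  moreover have "\<forall>e'\<in>?M'. \<forall>f'\<in>?M'. e' \<noteq> f' \<longrightarrow> edges_disjoint e' f'"
  proof (intro ballI impI)
    fix e' f' assume "e' \<in> ?M'" "f' \<in> ?M'" "e' \<noteq> f'"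
    then obtain e1 e2 where e: "e1 \<in> M - {?f}" "e2 \<in> M - {?f}" "e' = squeeze t ` e1" "f' = squeeze t ` e2"
      "e1 \<noteq> e2" by blast
    then have "edges_disjoint e1 e2" using M by (auto simp: is_SPM_def)
    then show "edges_disjoint e' f'"
      using squeeze_edges_disjoint[OF away(1)[OF e(1)] away(1)[OF e(2)] away(3)[OF e(1)] away(3)[OF e(2)]] e
      by simp
  qed
  ultimately show "is_SPM (m-1) ?M'" unfolding is_SPM_def by simp
qed

section \<open>Caterpillars\<close>

text \<open>A shape d of order m with spine length j: the first j edges are the boundary path
  0-1-...-j (d k = 0 for k < j), after which the distances d k strictly increase and stay
  below m-1, so that each further edge encloses all previous ones.  Outside [0, m) the shape
  is 0, so that shapes are determined by their values on [0, m).\<close>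

definition caterpillar :: "nat \<Rightarrow> nat \<Rightarrow> (nat \<Rightarrow> nat) \<Rightarrow> bool" where
  "caterpillar m j d \<longleftrightarrow> 1 \<le> j \<and> j \<le> m \<and> (\<forall>k<j. d k = 0) \<and>
     (\<forall>k. j \<le> k \<longrightarrow> Suc k < m \<longrightarrow> d k < d (Suc k)) \<and> (j < m \<longrightarrow> 1 \<le> d j) \<and>
     (\<forall>k. j \<le> k \<longrightarrow> k < m \<longrightarrow> d k + 2 \<le> m) \<and> (\<forall>k\<ge>m. d k = 0)"

definition cat_edge :: "(nat \<Rightarrow> nat) \<Rightarrow> nat \<Rightarrow> nat set" where
  "cat_edge d k = {k - d k, Suc k + d k}"

definition cat_blocker :: "nat \<Rightarrow> (nat \<Rightarrow> nat) \<Rightarrow> nat set set" where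
  "cat_blocker m d = cat_edge d ` {..<m}"

lemma cat_grow:
  assumes "caterpillar m j d" "j \<le> k" "k \<le> k'" "k' < m"
  shows "d k + (k' - k) \<le> d k'"
  using assms(3,4)
proof (induction k')
  case 0 then show ?case by simp
next
  case (Suc k')
  show ?case
  proof (cases "k = Suc k'")
    case True then show ?thesis by simp
  next
    case False
    then have "k \<le> k'" using Suc by simp
    then have "d k + (k' - k) \<le> d k'" using Suc by simp
    moreover have "d k' < d (Suc k')" using assms(1,2) \<open>k \<le> k'\<close> Suc(3) unfolding caterpillar_def by auto
    ultimately show ?thesis using \<open>k \<le> k'\<close> by simp
  qed
qed

lemma cat_bounds:
  assumes c: "caterpillar m j d" and k: "j \<le> k" "k < m"
  shows "k + 1 \<le> d k + j" "d k + 1 \<le> k"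
proof -
  have "j < m" using k by simp
  then have "1 \<le> d j" using c by (simp add: caterpillar_def)
  moreover have "d j + (k - j) \<le> d k" using cat_grow[OF c le_refl k] .
  ultimately show "k + 1 \<le> d k + j" using k by simp
  have "d k + (m - 1 - k) \<le> d (m - 1)" using cat_grow[OF c k(1), of "m-1"] k by simp
  moreover have "d (m-1) + 2 \<le> m" using c k unfolding caterpillar_def by auto
  ultimately show "d k + 1 \<le> k" using k by simp
qed

lemma cat_pos: "caterpillar m j d \<Longrightarrow> j \<le> k \<Longrightarrow> k < m \<Longrightarrow> 1 \<le> d k"
  using cat_bounds(1) by fastforce

lemma cat_j2: "2 \<le> m \<Longrightarrow> caterpillar m j d \<Longrightarrow> 2 \<le> j"
proof (rule ccontr)
  assume m: "2 \<le> m" and c: "caterpillar m j d" and "\<not> 2 \<le> j"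
  then have j: "j = 1" using c by (simp add: caterpillar_def)
  have "1 + 1 \<le> d 1 + j" "d 1 + 1 \<le> 1" using cat_bounds[OF c, of 1] j m by auto
  then show False using j by simp
qed

lemma cat_step: "caterpillar m j d \<Longrightarrow> Suc k < m \<Longrightarrow> j \<le> Suc k \<Longrightarrow> d k < d (Suc k)"
proof -
  assume c: "caterpillar m j d" and k: "Suc k < m" "j \<le> Suc k"
  show ?thesis
  proof (cases "j \<le> k")
    case True then show ?thesis using c k unfolding caterpillar_def by blast
  next
    case False
    then have "j = Suc k" using k by simp
    then have "d k = 0" "1 \<le> d (Suc k)" using c k unfolding caterpillar_def by auto
    then show ?thesis by simp
  qed
qed

lemma cat_zero: "caterpillar m j d \<Longrightarrow> k < j \<Longrightarrow> d k = 0"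
  unfolding caterpillar_def by auto

lemma cat_dmono: "caterpillar m j d \<Longrightarrow> k \<le> k' \<Longrightarrow> k' < m \<Longrightarrow> d k \<le> d k'"
proof (induction k')
  case 0 then show ?case by simp
next
  case (Suc k')
  show ?case
  proof (cases "k = Suc k'")
    case True then show ?thesis by simp
  next
    case False
    then have "d k \<le> d k'" using Suc by simp
    moreover have "d k' \<le> d (Suc k')"
    proof (cases "j \<le> Suc k'")
      case True then show ?thesis using cat_step[OF Suc(2) Suc(4)] by simp
    next
      case False then show ?thesis using cat_zero[OF Suc(2)] by simp
    qed
    ultimately show ?thesis by simp
  qed
qed

lemma cat_lo: "caterpillar m j d \<Longrightarrow> k < m \<Longrightarrow> k - d k < j \<and> d k \<le> k"
proof -
  assume c: "caterpillar m j d" and k: "k < m"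
  show ?thesis
  proof (cases "k < j")
    case True then show ?thesis using cat_zero[OF c] by simp
  next
    case False
    then show ?thesis using cat_bounds[OF c _ k] by simp
  qed
qed

lemma cat_hi: "caterpillar m j d \<Longrightarrow> k < m \<Longrightarrow> Suc k + d k < 2*m"
proof -
  assume c: "caterpillar m j d" and k: "k < m"
  show ?thesis
  proof (cases "k < j")
    case True then show ?thesis using cat_zero[OF c] k by simp
  next
    case False
    then have "d k + 2 \<le> m" using c k unfolding caterpillar_def by auto
    then show ?thesis using k by simp
  qed
qed

lemma cat_edge_sum: "caterpillar m j d \<Longrightarrow> k < m \<Longrightarrow> \<Sum>(cat_edge d k) = 2*k+1"
proof -
  assume c: "caterpillar m j d" and k: "k < m"
  have "d k \<le> k" using cat_lo[OF c k] by simp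
  then show ?thesis unfolding cat_edge_def by simp
qed

lemma cat_edge_ck: "caterpillar m j d \<Longrightarrow> k < m \<Longrightarrow> cat_edge d k \<in> ck_edges m"
proof -
  assume c: "caterpillar m j d" and k: "k < m"
  have "d k \<le> k" using cat_lo[OF c k] by simp
  moreover have "Suc k + d k < 2*m" by (rule cat_hi[OF c k])
  ultimately show ?thesis unfolding cat_edge_def ck_edges_iff by auto
qed

lemma cat_blocker_ck: "caterpillar m j d \<Longrightarrow> cat_blocker m d \<subseteq> ck_edges m"
  unfolding cat_blocker_def using cat_edge_ck by blast

lemma cat_edge_inj: "caterpillar m j d \<Longrightarrow> inj_on (cat_edge d) {..<m}"
proof (rule inj_onI)
  fix x y assume c: "caterpillar m j d" and h: "x \<in> {..<m}" "y \<in> {..<m}" "cat_edge d x = cat_edge d y"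
  then have "2*x+1 = 2*y+1" using cat_edge_sum[OF c] by (metis lessThan_iff)
  then show "x = y" by simp
qed

lemma cat_blocker_card: "caterpillar m j d \<Longrightarrow> card (cat_blocker m d) = m"
  unfolding cat_blocker_def using card_image[OF cat_edge_inj] by simp

lemma cat_blocker_sub: "caterpillar m j d \<Longrightarrow> e \<in> cat_blocker m d \<Longrightarrow> e \<subseteq> {..<2*m}"
  using cat_blocker_ck ck_edges_iff by blast

section \<open>Caterpillars are blockers\<close>

text \<open>Let an SPM M of CK(2m) contain the boundary edge {t, t+1} with t beyond the spine of a
  caterpillar.  Deleting t and t+1 turns the caterpillar into one of order m-1: the edges
  k < k0 that end before t are kept, and edge k+1 (for k >= k0), which encloses t and t+1,
  becomes edge k with distance d(k+1) - 1.  The split point k0 is found first.\<close>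

lemma threshold_index:
  fixes f :: "nat \<Rightarrow> nat"
  assumes mono: "\<And>k k'. k \<le> k' \<Longrightarrow> k' < n \<Longrightarrow> f k \<le> f k'"
  obtains k0 where "k0 \<le> n" "\<forall>k<k0. f k \<le> x" "\<forall>k. k0 \<le> k \<longrightarrow> k < n \<longrightarrow> x < f k"
proof -
  define Q where "Q k \<longleftrightarrow> k < n \<and> x < f k" for k
  define k0 where "k0 = (if \<exists>k. Q k then (LEAST k. Q k) else n)"
  have LQ: "Q k0" if "\<exists>k. Q k" using LeastI_ex[OF that] that unfolding k0_def by simp
  have k0n: "k0 \<le> n"
  proof (cases "\<exists>k. Q k")
    case True then show ?thesis using LQ unfolding Q_def by simp
  qed (simp add: k0_def)
  have "f k \<le> x" if "k < k0" for k
    using that k0n not_less_Least[of k Q] unfolding k0_def Q_def by (auto split: if_splits)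
  moreover have "x < f k" if "k0 \<le> k" "k < n" for k
  proof (cases "\<exists>k. Q k")
    case True
    then have "x < f k0" using LQ unfolding Q_def by simp
    then show ?thesis using mono[OF that] by simp
  next
    case False
    then have "k0 = n" unfolding k0_def by auto
    then show ?thesis using that by simp
  qed
  ultimately show ?thesis using that k0n by blast
qed

lemma caterpillar_split_point:
  assumes c: "caterpillar (Suc n) j d" and tj: "j \<le> t"
  obtains k0 where "k0 \<le> n" "\<forall>k<k0. Suc k + d k < t" "j \<le> Suc k0"
    "\<forall>k. k0 \<le> k \<longrightarrow> Suc k < Suc n \<longrightarrow> t + 2 \<le> Suc (Suc k) + d (Suc k)"
proof -
  have t: "1 \<le> t" using tj c by (simp add: caterpillar_def)
  have mono: "Suc k + d k \<le> Suc k' + d k'" if "k \<le> k'" "k' < n" for k k'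
    using cat_dmono[OF c, of k k'] that by simp
  obtain k0 where k0: "k0 \<le> n" "\<forall>k<k0. Suc k + d k \<le> t - 1"
    "\<forall>k. k0 \<le> k \<longrightarrow> k < n \<longrightarrow> t - 1 < Suc k + d k"
    using threshold_index[of n "\<lambda>k. Suc k + d k" "t - 1", OF mono] by blast
  have spine: "j \<le> Suc k0"
  proof (rule ccontr)
    assume "\<not> j \<le> Suc k0"
    then have "d k0 = 0" "k0 < n" using cat_zero[OF c, of k0] c by (auto simp: caterpillar_def)
    then show False using k0(3) tj \<open>\<not> j \<le> Suc k0\<close> by auto
  qed
  have below: "\<forall>k<k0. Suc k + d k < t" using k0(2) t by auto
  have "t + 2 \<le> Suc (Suc k) + d (Suc k)" if "k0 \<le> k" "Suc k < Suc n" for k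
  proof -
    have "t - 1 < Suc k + d k" using k0(3) that by simp
    moreover have "d k < d (Suc k)" using cat_step[OF c, of k] that spine by simp
    ultimately show ?thesis using t by simp
  qed
  then show ?thesis using that[OF k0(1) below spine] by blast
qed

definition cat_delete :: "nat \<Rightarrow> nat \<Rightarrow> (nat \<Rightarrow> nat) \<Rightarrow> nat \<Rightarrow> nat" where
  "cat_delete n k0 d k = (if k < k0 then d k else if k < n then d (Suc k) - 1 else 0)"

text \<open>The spine of the reduced caterpillar shrinks by one exactly when its last spine edge
  is edge k0 and the next edge does not become a spine edge.\<close>

definition delete_spine :: "nat \<Rightarrow> nat \<Rightarrow> nat \<Rightarrow> (nat \<Rightarrow> nat) \<Rightarrow> nat" where
  "delete_spine n j k0 d = (if Suc k0 = j \<and> (j = Suc n \<or> d j \<noteq> 1) then j - 1 else j)"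

locale cat_deletion =
  fixes n j t k0 :: nat and d :: "nat \<Rightarrow> nat"
  assumes c: "caterpillar (Suc n) j d" and n: "1 \<le> n" and tj: "j \<le> t"
    and k0: "k0 \<le> n" and below: "\<forall>k<k0. Suc k + d k < t" and spine: "j \<le> Suc k0"
    and above: "\<forall>k. k0 \<le> k \<longrightarrow> Suc k < Suc n \<longrightarrow> t + 2 \<le> Suc (Suc k) + d (Suc k)"
begin

abbreviation "d' \<equiv> cat_delete n k0 d"
abbreviation "j' \<equiv> delete_spine n j k0 d"

lemma delete_j2: "2 \<le> j"
  using cat_j2[OF _ c] n by simp

lemma delete_shifted_pos: "k0 \<le> k \<Longrightarrow> Suc k < Suc n \<Longrightarrow> 1 \<le> d (Suc k)"
  using cat_bounds[OF c, of "Suc k"] spine by simp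

lemma delete_spine_cases: "j' = j \<or> (j' = j - 1 \<and> Suc k0 = j \<and> (j = Suc n \<or> d j \<noteq> 1))"
  unfolding delete_spine_def by auto

lemma delete_spine_same: "j' = j \<Longrightarrow> j < Suc n"
  using delete_j2 k0 spine c unfolding delete_spine_def caterpillar_def by (auto split: if_splits)

lemma cat_delete_zero: "k < j' \<Longrightarrow> d' k = 0"
proof (cases "k < k0")
  case True
  assume "k < j'"
  then show ?thesis using True delete_spine_cases cat_zero[OF c, of k] unfolding cat_delete_def by auto
next
  case False
  assume k: "k < j'"
  then have "k0 = k" "j' = j" "Suc k0 = j" using False delete_spine_cases spine by auto
  then have "d j = 1" "j < Suc n" using delete_spine_same unfolding delete_spine_def by (auto split: if_splits)
  then show ?thesis unfolding cat_delete_def using False \<open>Suc k0 = j\<close> \<open>k0 = k\<close> by simp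
qed

lemma cat_delete_step: "j' \<le> k \<Longrightarrow> Suc k < n \<Longrightarrow> d' k < d' (Suc k)"
proof -
  assume k: "j' \<le> k" "Suc k < n"
  consider "Suc k < k0" | "Suc k = k0" | "k0 \<le> k" by linarith
  then show ?thesis
  proof cases
    case 1
    then have "j' = j" using delete_spine_cases k by auto
    then show ?thesis using cat_step[OF c] k 1 unfolding cat_delete_def by simp
  next
    case 2
    then have "j' = j" using delete_spine_cases k by auto
    then have "d k < d (Suc k)" "d (Suc k) < d (Suc (Suc k))" using cat_step[OF c] k by auto
    then show ?thesis unfolding cat_delete_def using 2 k by simp
  next
    case 3
    have "d (Suc k) < d (Suc (Suc k))" using cat_step[OF c] k spine 3 by simp
    then show ?thesis unfolding cat_delete_def using 3 k delete_shifted_pos[OF 3] by simp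
  qed
qed

lemma cat_delete_start: "j' < n \<Longrightarrow> 1 \<le> d' j'"
proof (cases "j' = j")
  case True
  assume jn: "j' < n"
  show ?thesis
  proof (cases "j < k0")
    case True
    then show ?thesis using \<open>j' = j\<close> delete_spine_same c unfolding cat_delete_def caterpillar_def by auto
  next
    case False
    have "Suc j + 1 \<le> d (Suc j) + j" using cat_bounds(1)[OF c, of "Suc j"] jn \<open>j' = j\<close> by simp
    then show ?thesis unfolding cat_delete_def using False jn \<open>j' = j\<close> by simp
  qed
next
  case False
  assume jn: "j' < n"
  then have h: "j' = j - 1" "Suc k0 = j" "j = Suc n \<or> d j \<noteq> 1" using delete_spine_cases False by auto
  then have "d j \<noteq> 1" "1 \<le> d j" using c jn delete_j2 by (auto simp: caterpillar_def)
  moreover have "j' = k0" using h by simp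
  moreover from this have "d' j' = d (Suc k0) - 1" unfolding cat_delete_def using jn by simp
  ultimately show ?thesis using h by simp
qed

lemma cat_delete_bound: "j' \<le> k \<Longrightarrow> k < n \<Longrightarrow> d' k + 2 \<le> n"
proof (cases "k < k0")
  case True
  assume k: "j' \<le> k" "k < n"
  then have "j' = j" using True delete_spine_cases by auto
  then have "d k + 1 \<le> k" using cat_bounds(2)[OF c] k by simp
  then show ?thesis unfolding cat_delete_def using True k by simp
next
  case False
  assume k: "j' \<le> k" "k < n"
  then have "d (Suc k) + 2 \<le> Suc n" using c spine False unfolding caterpillar_def by auto
  then show ?thesis unfolding cat_delete_def using False k delete_shifted_pos[of k] by simp
qed

lemma cat_delete_caterpillar: "caterpillar n j' d'"
  unfolding caterpillar_def
proof (intro conjI allI impI)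
  show "1 \<le> j'" "j' \<le> n"
    using delete_spine_cases delete_spine_same delete_j2 c k0 by (auto simp: caterpillar_def)
  show "d' k = 0" if "n \<le> k" for k using that k0 unfolding cat_delete_def by auto
qed (use cat_delete_zero cat_delete_step cat_delete_start cat_delete_bound in auto)

lemma lift_cat_delete_edge:
  assumes k: "k < n" shows "lift t ` cat_edge d' k \<in> cat_blocker (Suc n) d"
proof (cases "k < k0")
  case True
  then have "cat_edge d' k = cat_edge d k" unfolding cat_edge_def cat_delete_def by simp
  moreover have "lift t ` cat_edge d k = cat_edge d k"
    using below True unfolding cat_edge_def lift_def by auto
  ultimately show ?thesis using k unfolding cat_blocker_def by simp
next
  case False
  have sk: "Suc k < Suc n" using k by simp
  have dp: "1 \<le> d (Suc k)" using delete_shifted_pos False sk by simp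
  have "cat_edge d' k = {Suc k - d (Suc k), k + d (Suc k)}"
    unfolding cat_edge_def cat_delete_def using False k dp by auto
  moreover have "Suc k - d (Suc k) < t" using cat_lo[OF c sk] tj by simp
  moreover have "t \<le> k + d (Suc k)" using above False sk by simp
  ultimately have "lift t ` cat_edge d' k = cat_edge d (Suc k)"
    unfolding lift_def cat_edge_def by auto
  then show ?thesis using sk unfolding cat_blocker_def by simp
qed

end

text \<open>Every caterpillar meets every SPM: take an innermost boundary edge {t, t+1} of the SPM.
  If t lies on the spine, that edge belongs to the caterpillar; otherwise delete t, t+1 from
  both and use induction.\<close>

lemma caterpillar_blocks: "caterpillar m j d \<Longrightarrow> is_SPM m M \<Longrightarrow> cat_blocker m d \<inter> M \<noteq> {}"
proof (induction m arbitrary: j d M)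
  case 0 then show ?case unfolding caterpillar_def by auto
next
  case (Suc n)
  note c = Suc.prems(1) and M = Suc.prems(2)
  obtain t where t: "Suc t < 2 * Suc n" "{t, Suc t} \<in> M" using SPM_innermost[OF M] by auto
  show ?case
  proof (cases "t < j")
    case True
    then have "cat_edge d t = {t, Suc t}" "t < Suc n"
      using cat_zero[OF c] c unfolding cat_edge_def caterpillar_def by auto
    then show ?thesis using t unfolding cat_blocker_def by (metis IntI empty_iff imageI lessThan_iff)
  next
    case False
    then have tj: "j \<le> t" by simp
    have n: "1 \<le> n" using tj t c by (auto simp: caterpillar_def)
    obtain k0 where k0: "k0 \<le> n" "\<forall>k<k0. Suc k + d k < t" "j \<le> Suc k0"
      "\<forall>k. k0 \<le> k \<longrightarrow> Suc k < Suc n \<longrightarrow> t + 2 \<le> Suc (Suc k) + d (Suc k)"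
      using caterpillar_split_point[OF c tj] by blast
    interpret cat_deletion n j t k0 d
      by unfold_locales (use c n tj k0 in auto)
    note reduced = cat_delete_caterpillar lift_cat_delete_edge
    let ?M' = "(\<lambda>e. squeeze t ` e) ` (M - {{t, Suc t}})"
    have "is_SPM n ?M'" using SPM_delete_boundary_edge(1)[OF M t(2) t(1)] by simp
    then obtain k where k: "k < n" "cat_edge (cat_delete n k0 d) k \<in> ?M'"
      using Suc.IH[OF reduced(1)] unfolding cat_blocker_def by blast
    then obtain e where e: "e \<in> M - {{t, Suc t}}" "cat_edge (cat_delete n k0 d) k = squeeze t ` e"
      by blast
    then have "lift t ` cat_edge (cat_delete n k0 d) k = e"
      using SPM_delete_boundary_edge(2)[OF M t(2) t(1)] by simp
    then show ?thesis using reduced(2)[OF k(1)] e(1) by blast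
  qed
qed

lemma caterpillar_blocker: "0 < m \<Longrightarrow> caterpillar m j d \<Longrightarrow> is_blocker m (cat_blocker m d)"
  unfolding is_blocker_def is_blocking_set_def
  using cat_blocker_ck cat_blocker_card caterpillar_blocks by blast

text \<open>Conversely, let a caterpillar of order n be lifted over the two new vertices x+1, x+2
  and the boundary edge {x, x+1} be added.  If the result is a blocker of CK(2n+2), then x is
  the end of the spine (or the vertex before it) and the result is again a caterpillar, whose
  spine ends at x+1; all other positions of x contradict the blocking property.\<close>

definition cat_insert :: "nat \<Rightarrow> nat \<Rightarrow> (nat \<Rightarrow> nat) \<Rightarrow> nat \<Rightarrow> nat" where
  "cat_insert m x d k = (if k \<le> x then 0 else if k < m then Suc (d (k - 1)) else 0)"

locale cat_insertion =
  fixes n j x :: nat and d :: "nat \<Rightarrow> nat"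
  assumes c: "caterpillar n j d" and n: "2 \<le> n" and x: "x < 2*n"
begin

abbreviation "L e \<equiv> lift (Suc x) ` e"
abbreviation "B \<equiv> (\<lambda>e. L e) ` cat_blocker n d \<union> {{x, Suc x}}"

lemma insert_spine: "2 \<le> j" "j \<le> n"
  using cat_j2[OF n c] c by (auto simp: caterpillar_def)

lemma lifted_in: "k < n \<Longrightarrow> L (cat_edge d k) \<in> B"
  unfolding cat_blocker_def by blast

lemma lifted_edge: "L (cat_edge d k) = {lift (Suc x) (k - d k), lift (Suc x) (Suc k + d k)}"
  unfolding cat_edge_def by simp

text \<open>If x+2 lies on the spine, the spine edges at x and x+1 become {x, x+3} and {x+3, x+4},
  which both touch the missing boundary edge {x+2, x+3}.\<close>

lemma insert_inside_spine: "x + 2 \<le> j \<Longrightarrow> \<not> is_blocker (Suc n) B"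
proof
  assume xj: "x + 2 \<le> j" and BB: "is_blocker (Suc n) B"
  have "d x = 0" "d (Suc x) = 0" using cat_zero[OF c] xj by auto
  then have e: "L (cat_edge d x) = {x, x+3}" "L (cat_edge d (Suc x)) = {x+3, x+4}"
    unfolding lifted_edge by (simp_all add: lift_def eval_nat_numeral)
  have "x < n" "Suc x < n" using xj insert_spine by auto
  then have in1: "{x, x+3} \<in> B" "{x+3, x+4} \<in> B" using lifted_in e by metis+
  have nb: "{x+2, Suc (x+2)} \<notin> B"
  proof
    assume "{x+2, Suc (x+2)} \<in> B"
    then obtain e where "{x+2, Suc (x+2)} = L e" by (auto simp: doubleton_eq_iff)
    then have "Suc (Suc x) \<in> L e" by (metis add_2_eq_Suc' insertI1)
    then obtain v where "Suc (Suc x) = lift (Suc x) v" by blast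
    then show False using lift_notin(2)[of "Suc x" v] by simp
  qed
  have "{x, x+3} = {x+3, x+4}"
    by (rule blocker_boundary_gap[OF _ BB _ nb in1]) (use n xj insert_spine in auto)
  then show False by (simp add: doubleton_eq_iff)
qed

lemma insert_caterpillar:
  assumes xj: "x \<le> j" "j \<le> Suc x"
  shows "caterpillar (Suc n) (Suc x) (cat_insert (Suc n) x d)"
  unfolding caterpillar_def
proof (intro conjI allI impI)
  show "1 \<le> Suc x" "Suc x \<le> Suc n" using xj insert_spine by auto
  show "cat_insert (Suc n) x d k = 0" if "k < Suc x" for k using that unfolding cat_insert_def by simp
  show "cat_insert (Suc n) x d k < cat_insert (Suc n) x d (Suc k)" if "Suc x \<le> k" "Suc k < Suc n" for k
    using cat_step[OF c, of "k-1"] that xj unfolding cat_insert_def by simp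
  show "1 \<le> cat_insert (Suc n) x d (Suc x)" if "Suc x < Suc n" using that unfolding cat_insert_def by simp
  show "cat_insert (Suc n) x d k + 2 \<le> Suc n" if "Suc x \<le> k" "k < Suc n" for k
  proof (cases "j \<le> k - 1")
    case True
    then have "d (k-1) + 2 \<le> n" using c that unfolding caterpillar_def by auto
    then show ?thesis unfolding cat_insert_def using that by simp
  next
    case False
    then show ?thesis using cat_zero[OF c] that n unfolding cat_insert_def by simp
  qed
  show "cat_insert (Suc n) x d k = 0" if "Suc n \<le> k" for k using that unfolding cat_insert_def by simp
qed

lemma insert_at_spine_end:
  assumes xj: "x \<le> j" "j \<le> Suc x"
  shows "B = cat_blocker (Suc n) (cat_insert (Suc n) x d)"
proof -
  let ?d = "cat_insert (Suc n) x d"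
  have low: "L (cat_edge d k) = cat_edge ?d k" if "k < x" for k
    using cat_zero[OF c] that xj unfolding lifted_edge cat_edge_def cat_insert_def by (simp add: lift_def)
  have high: "L (cat_edge d k) = cat_edge ?d (Suc k)" if "x \<le> k" "k < n" for k
  proof -
    have "k - d k < Suc x" using cat_lo[OF c that(2)] xj by simp
    moreover have "Suc x \<le> Suc k + d k" using that by simp
    moreover have "?d (Suc k) = Suc (d k)" unfolding cat_insert_def using that by simp
    ultimately show ?thesis unfolding lifted_edge cat_edge_def using cat_lo[OF c that(2)]
      by (simp add: lift_less)
  qed
  have mid: "cat_edge ?d x = {x, Suc x}" unfolding cat_edge_def cat_insert_def by simp
  have xn: "x < Suc n" using xj insert_spine by simp
  show ?thesis
  proof
    show "B \<subseteq> cat_blocker (Suc n) ?d"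
    proof
      fix e assume "e \<in> B"
      then consider "e = {x, Suc x}" | k where "k < n" "e = L (cat_edge d k)"
        unfolding cat_blocker_def by auto
      then show "e \<in> cat_blocker (Suc n) ?d"
      proof cases
        case 1 then show ?thesis using mid xn unfolding cat_blocker_def by (metis imageI lessThan_iff)
      next
        case 2 then show ?thesis using low high unfolding cat_blocker_def
          by (cases "k < x") (auto simp: not_less)
      qed
    qed
    show "cat_blocker (Suc n) ?d \<subseteq> B"
    proof
      fix e assume "e \<in> cat_blocker (Suc n) ?d"
      then obtain k where k: "k < Suc n" "e = cat_edge ?d k" unfolding cat_blocker_def by blast
      consider "k < x" | "k = x" | "x < k" by linarith
      then show "e \<in> B"
      proof cases
        case 1 then show ?thesis using low[OF 1] lifted_in[of k] k xj insert_spine by simp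
      next
        case 2 then show ?thesis using mid k by simp
      next
        case 3 then show ?thesis using high[of "k-1"] lifted_in[of "k-1"] k by simp
      qed
    qed
  qed
qed

text \<open>Suppose x lies beyond the spine.  If some lifted edge ends at x, it and {x, x+1} both
  touch the boundary edge {x-1, x}, which is absent, contradicting blocker_boundary_gap.\<close>

lemma insert_beyond_spine_hit:
  assumes xj: "Suc j \<le> x" and k: "j \<le> k" "k < n" "Suc k + d k = x"
  shows "\<not> is_blocker (Suc n) B"
proof
  assume BB: "is_blocker (Suc n) B"
  have lk: "k - d k < x" using cat_lo[OF c k(2)] xj by simp
  have in1: "{k - d k, x} \<in> B" using lifted_in[OF k(2)] lk k(3) unfolding lifted_edge by (simp add: lift_def)
  have x1: "Suc (x - 1) = x" using xj by simp
  have nb: "{x - 1, x} \<notin> B"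
  proof
    assume "{x - 1, x} \<in> B"
    then obtain k' where k': "k' < n" "{x - 1, x} = L (cat_edge d k')"
      using x1 unfolding cat_blocker_def by (auto simp: doubleton_eq_iff)
    have small: "lift (Suc x) v \<le> x \<Longrightarrow> lift (Suc x) v = v" for v
      unfolding lift_def by (auto split: if_splits)
    have mem: "lift (Suc x) (k' - d k') \<in> {x - 1, x}" "lift (Suc x) (Suc k' + d k') \<in> {x - 1, x}"
      using k'(2) unfolding lifted_edge by blast+
    then have "lift (Suc x) (k' - d k') = k' - d k'" "lift (Suc x) (Suc k' + d k') = Suc k' + d k'"
      using small[of "k' - d k'"] small[of "Suc k' + d k'"] x1 by auto
    then have "k' - d k' \<in> {x - 1, x}" "Suc k' + d k' \<in> {x - 1, x}" using mem by auto
    then have "d k' = 0" "k' = x - 1" using cat_lo[OF c k'(1)] by auto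
    moreover have "1 \<le> d k'" using cat_pos[OF c _ k'(1)] \<open>k' = x - 1\<close> xj by simp
    ultimately show False by simp
  qed
  have "{k - d k, x} = {x, Suc x}"
    by (rule blocker_boundary_gap[where v = "x - 1", OF _ BB _ _ in1]) (use nb n x x1 in auto)
  then show False using lk by (simp add: doubleton_eq_iff)
qed

text \<open>If the spine ends at or before x+1, the lifted edge k lies in the parallel class k or
  k+1 of CK(2n+2), according to whether it ends before x+1 or not.\<close>

lemma lifted_edge_sum:
  assumes "j \<le> Suc x" "k < n"
  shows "\<Sum>(L (cat_edge d k)) = (if Suc k + d k \<le> x then 2*k+1 else 2*k+3)"
proof -
  have "k - d k < Suc x" "d k \<le> k" using cat_lo[OF c assms(2)] assms(1) by auto
  then show ?thesis unfolding lifted_edge by (auto simp: lift_def)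
qed

lemma new_edge_class:
  assumes xj: "Suc j \<le> x" and miss: "\<forall>k. j \<le> k \<longrightarrow> k < n \<longrightarrow> Suc k + d k \<noteq> x"
    and k0: "k0 \<le> n" "\<forall>k<k0. Suc k + d k \<le> x" "\<forall>k. k0 \<le> k \<longrightarrow> k < n \<longrightarrow> x < Suc k + d k"
  shows "(2*x+1) mod (2 * Suc n) \<noteq> 2*k0+1"
proof
  assume s: "(2*x+1) mod (2 * Suc n) = 2*k0+1"
  show False
  proof (cases "2*x+1 < 2 * Suc n")
    case True
    then have "x = k0" using s by simp
    then have k1: "k0 - 1 < k0" "j \<le> k0 - 1" "k0 - 1 < n" using k0(1) xj by auto
    then have "Suc (k0 - 1) + d (k0 - 1) \<le> x" using k0(2) by blast
    moreover have "Suc (k0 - 1) + d (k0 - 1) \<noteq> x" using miss k1 by blast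
    moreover have "x \<le> Suc (k0 - 1) + d (k0 - 1)" using \<open>x = k0\<close> k1 by simp
    ultimately show False by simp
  next
    case False
    then have "(2*x+1) mod (2 * Suc n) = 2*x+1 - 2 * Suc n" using x by (simp add: le_mod_geq)
    then have xk: "x = k0 + Suc n" using s False by simp
    then have "k0 < n" "x < Suc k0 + d k0" using k0 x by auto
    show False
    proof (cases "k0 < j")
      case True
      then show False using cat_zero[OF c, of k0] \<open>x < Suc k0 + d k0\<close> xk by simp
    next
      case False
      then have "d k0 + 2 \<le> n" using c \<open>k0 < n\<close> unfolding caterpillar_def by simp
      then show False using \<open>x < Suc k0 + d k0\<close> xk by simp
    qed
  qed
qed

text \<open>Otherwise let k0 be the first edge reaching beyond x.  The blocker must contain an edge
  of the parallel class k0; this is neither {x, x+1} nor a lifted edge.\<close>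

lemma insert_beyond_spine_miss:
  assumes xj: "Suc j \<le> x" and miss: "\<forall>k. j \<le> k \<longrightarrow> k < n \<longrightarrow> Suc k + d k \<noteq> x"
  shows "\<not> is_blocker (Suc n) B"
proof
  assume BB: "is_blocker (Suc n) B"
  have mono: "Suc k + d k \<le> Suc k' + d k'" if "k \<le> k'" "k' < n" for k k'
    using cat_dmono[OF c, of k k'] that by simp
  obtain k0 where k0: "k0 \<le> n" "\<forall>k<k0. Suc k + d k \<le> x"
    "\<forall>k. k0 \<le> k \<longrightarrow> k < n \<longrightarrow> x < Suc k + d k"
    using threshold_index[of n "\<lambda>k. Suc k + d k" x, OF mono] by blast
  have "is_SPM (Suc n) (par_class (Suc n) k0)" by (rule par_class_SPM) simp
  then obtain e where e: "e \<in> B" "e \<in> par_class (Suc n) k0"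
    using BB unfolding is_blocker_def is_blocking_set_def by blast
  then have es: "(\<Sum>e) mod (2 * Suc n) = 2*k0+1" using par_class_sum[of k0 "Suc n"] k0(1) by simp
  have "(2*x+1) mod (2 * Suc n) \<noteq> 2*k0+1" by (rule new_edge_class[OF xj miss k0])
  moreover have "\<Sum>{x, Suc x} = 2*x+1" by simp
  ultimately have "e \<noteq> {x, Suc x}" using es by metis
  then obtain k where k: "k < n" "e = L (cat_edge d k)" using e(1) unfolding cat_blocker_def by auto
  show False
  proof (cases "Suc k + d k \<le> x")
    case True
    have "k < k0"
    proof (rule ccontr)
      assume "\<not> k < k0"
      then have "x < Suc k + d k" using k0(3) k(1) by simp
      then show False using True by simp
    qed
    moreover have "\<Sum>e = 2*k+1" using lifted_edge_sum[of k] k xj True by simp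
    ultimately show False using es k(1) by simp
  next
    case False
    then have "k0 \<le> k" using k0(2) by (meson not_le)
    moreover have "\<Sum>e = 2*k+3" using lifted_edge_sum[of k] k xj False by simp
    ultimately show False using es k(1) by simp
  qed
qed

end

lemma insert_blocker_caterpillar:
  assumes c: "caterpillar n j d" and n: "2 \<le> n" and x: "x < 2*n"
    and B: "is_blocker (Suc n) ((\<lambda>e. lift (Suc x) ` e) ` cat_blocker n d \<union> {{x, Suc x}})"
  shows "\<exists>j' d'. caterpillar (Suc n) j' d' \<and>
           (\<lambda>e. lift (Suc x) ` e) ` cat_blocker n d \<union> {{x, Suc x}} = cat_blocker (Suc n) d'"
proof -
  interpret cat_insertion n j x d using c n x by unfold_locales
  consider "x + 2 \<le> j" | "x \<le> j" "j \<le> Suc x" | "Suc j \<le> x" by linarith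
  then show ?thesis
  proof cases
    case 1 then show ?thesis using insert_inside_spine B by blast
  next
    case 2 then show ?thesis
      using insert_caterpillar insert_at_spine_end by blast
  next
    case 3 then show ?thesis
      using insert_beyond_spine_hit insert_beyond_spine_miss B by blast
  qed
qed

section \<open>Every blocker is a rotated caterpillar\<close>

definition bnd :: "nat \<Rightarrow> nat \<Rightarrow> nat set" where
  "bnd m v = {v mod (2*m), Suc v mod (2*m)}"

lemma bnd_mod: "bnd m (v mod (2*m)) = bnd m v"
  unfolding bnd_def by (simp add: mod_Suc_eq)

lemma bnd_add: "bnd m (v + 2*m) = bnd m v"
proof -
  have "Suc (v + 2*m) = Suc v + 2*m" by simp
  then show ?thesis unfolding bnd_def by (simp only: mod_add_self2)
qed

lemma rot_bnd: "rot m r ` bnd m w = bnd m (w + r)"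
  unfolding bnd_def rot_def by (simp add: mod_add_left_eq mod_Suc_eq)

lemma bnd_lt: "Suc v < 2*m \<Longrightarrow> bnd m v = {v, Suc v}"
  unfolding bnd_def by simp

lemma bnd_last: "0 < m \<Longrightarrow> bnd m (2*m - 1) = {2*m-1, 0}"
  unfolding bnd_def by simp

lemma bnd_sub: "0 < m \<Longrightarrow> bnd m v \<subseteq> {..<2*m}"
  unfolding bnd_def by simp

lemma bnd_inj:
  assumes "2 \<le> m" shows "inj_on (bnd m) {..<2*m}"
proof (rule inj_onI)
  fix u u' assume h: "u \<in> {..<2*m}" "u' \<in> {..<2*m}" "bnd m u = bnd m u'"
  then have e: "{u, Suc u mod (2*m)} = {u', Suc u' mod (2*m)}" unfolding bnd_def by simp
  show "u = u'"
  proof (rule ccontr)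
    assume ne: "u \<noteq> u'"
    then have "u = Suc u' mod (2*m)" "u' = Suc u mod (2*m)" using e by (auto simp: doubleton_eq_iff)
    then show False using h assms by (auto simp: mod_if split: if_splits)
  qed
qed

lemma even_boundary_SPM:
  assumes "0 < m" shows "is_SPM m ((\<lambda>i. {2*i, Suc (2*i)}) ` {..<m})"
proof -
  let ?M = "(\<lambda>i. {2*i, Suc (2*i)}) ` {..<m}"
  have inj: "inj_on (\<lambda>i. {2*i, Suc (2*i)}) {..<m}"
    by (rule inj_onI) (auto simp: doubleton_eq_iff)
  have c: "card ?M = m" using card_image[OF inj] by simp
  have ck: "?M \<subseteq> ck_edges m"
  proof
    fix e assume "e \<in> ?M"
    then obtain i where i: "i < m" "e = {2*i, Suc (2*i)}" by auto
    then have "e \<subseteq> {..<2*m}" "card e = 2" by auto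
    then show "e \<in> ck_edges m" unfolding ck_edges_iff by simp
  qed
  have dj: "edges_disjoint {2*i, Suc (2*i)} {2*i', Suc (2*i')}" if "i \<noteq> i'" for i i'
  proof -
    have "{2*i, Suc (2*i)} \<inter> {2*i', Suc (2*i')} = {}" using that by auto
    moreover have "\<not> edges_cross {2*i, Suc (2*i)} {2*i', Suc (2*i')}"
      by (rule not_edges_cross) (auto simp: strictly_between_def)
    ultimately show ?thesis by (simp add: edges_disjoint_def)
  qed
  have "\<forall>e\<in>?M. \<forall>f\<in>?M. e \<noteq> f \<longrightarrow> edges_disjoint e f"
  proof (intro ballI impI)
    fix e f assume "e \<in> ?M" "f \<in> ?M" "e \<noteq> f"
    then obtain i i' where "e = {2*i, Suc (2*i)}" "f = {2*i', Suc (2*i')}" "i \<noteq> i'" by auto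
    then show "edges_disjoint e f" using dj by simp
  qed
  then show ?thesis unfolding is_SPM_def using c ck by blast
qed

text \<open>A blocker contains a boundary edge (it meets the SPM above) but not all 2m of them
  (it has only m edges), so some present boundary edge is followed by an absent one.\<close>

lemma blocker_boundary_end:
  assumes m: "2 \<le> m" and B: "is_blocker m B"
  shows "\<exists>v. bnd m (v + 2*m - 1) \<in> B \<and> bnd m v \<notin> B"
proof (rule ccontr)
  assume "\<not> ?thesis"
  then have H: "\<And>v. bnd m (v + 2*m - 1) \<in> B \<Longrightarrow> bnd m v \<in> B" by blast
  have m0: "0 < m" using m by simp
  have "B \<inter> (\<lambda>i. {2*i, Suc (2*i)}) ` {..<m} \<noteq> {}"
    using B even_boundary_SPM[OF m0] by (simp add: is_blocker_def is_blocking_set_def)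
  then obtain i where i: "i < m" "{2*i, Suc (2*i)} \<in> B" by auto
  then have b0: "bnd m (2*i) \<in> B" using bnd_lt[of "2*i" m] by simp
  have all: "bnd m (2*i + n) \<in> B" for n
  proof (induction n)
    case 0 then show ?case using b0 by simp
  next
    case (Suc n)
    have "bnd m (2*i + Suc n + 2*m - 1) = bnd m (2*i + n)"
      using bnd_add[of m "2*i+n"] by (simp add: add.commute add.left_commute)
    then show ?case using H[of "2*i + Suc n"] Suc by simp
  qed
  have "bnd m ` {..<2*m} \<subseteq> B"
  proof
    fix e assume "e \<in> bnd m ` {..<2*m}"
    then obtain u where u: "u < 2*m" "e = bnd m u" by auto
    have "bnd m (2*i + (u + 2*m - 2*i)) = bnd m (u + 2*m)" using i by simp
    then show "e \<in> B" using all[of "u + 2*m - 2*i"] bnd_add u by simp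
  qed
  moreover have "finite B" using blocker_finite[OF B] .
  ultimately have "card (bnd m ` {..<2*m}) \<le> card B" by (simp add: card_mono)
  then have "2*m \<le> m" using card_image[OF bnd_inj[OF m]] B by (simp add: is_blocker_def)
  then show False using m by simp
qed

lemma rot_lift:
  assumes s: "s < 2*m - 2" and w: "w < 2*m - 2"
  shows "rot m (2*m - s) w = lift (2*m - 2 - s) (rot (m-1) (2*(m-1) - s) w)"
proof -
  have n: "2*(m-1) = 2*m - 2" by (rule two_times_pred)
  show ?thesis
  proof (cases "s \<le> w")
    case True
    have "rot (m-1) (2*(m-1) - s) w = (w - s + (2*m-2)) mod (2*m-2)"
      unfolding rot_def n using s w True by (simp add: algebra_simps)
    also have "\<dots> = (w - s) mod (2*m-2)" by (rule mod_add_self2)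
    also have "\<dots> = w - s" using w s by simp
    finally have 1: "rot (m-1) (2*(m-1) - s) w = w - s" .
    have "rot m (2*m - s) w = (w - s + 2*m) mod (2*m)" unfolding rot_def using s True by simp
    also have "\<dots> = w - s" using w by simp
    finally show ?thesis using 1 unfolding lift_def using w s True by simp
  next
    case False
    have 1: "rot (m-1) (2*(m-1) - s) w = w + (2*m-2) - s"
      unfolding rot_def n using s w False by simp
    have "rot m (2*m - s) w = w + 2*m - s" unfolding rot_def using s w False by simp
    moreover have ge: "2*m-2-s \<le> w + (2*m-2) - s" by arith
    moreover have "lift (2*m-2-s) (w + (2*m-2) - s) = w + (2*m-2) - s + 2" by (rule lift_less(2)[OF ge])
    moreover have "w + (2*m-2) - s + 2 = w + 2*m - s" using s by arith
    ultimately show ?thesis using 1 by simp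
  qed
qed

lemma rot_edges_lift:
  assumes s: "s < 2*m - 2" and E: "\<forall>e\<in>X. e \<subseteq> {..<2*m-2}"
  shows "rot_edges m (2*m - s) X = (\<lambda>e. lift (2*m - 2 - s) ` e) ` rot_edges (m-1) (2*(m-1) - s) X"
proof -
  have "rot m (2*m - s) ` e = lift (2*m - 2 - s) ` (rot (m-1) (2*(m-1) - s) ` e)" if "e \<in> X" for e
    unfolding image_image by (rule image_cong) (use rot_lift[OF s] E that in auto)
  then show ?thesis unfolding rot_edges_def image_image by simp
qed

lemma rot_edges_solve:
  assumes "\<forall>e\<in>B. e \<subseteq> {..<2*m}" "0 < m" "rot_edges m k B = X"
  shows "\<exists>s<2*m. B = rot_edges m s X"
proof -
  have "B = rot_edges m (2*m - k mod (2*m)) (rot_edges m k B)" using rot_edges_inverse[OF assms(1), of k] by simp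
  then have "B = rot_edges m (2*m - k mod (2*m)) X" using assms(3) by simp
  then have "B = rot_edges m ((2*m - k mod (2*m)) mod (2*m)) X" using rot_edges_mod by simp
  moreover have "(2*m - k mod (2*m)) mod (2*m) < 2*m" using assms(2) by simp
  ultimately show ?thesis by blast
qed

text \<open>Base case m = 2: a blocker consists of one edge from each of the two parallel classes
  {{0,1},{2,3}} and {{1,2},{0,3}}, i.e. of two adjacent boundary edges, which is a rotation
  of the caterpillar {{0,1},{1,2}}.\<close>

lemma par_classes_order_2: "par_class 2 0 = {{0,1},{3,2}}" "par_class 2 1 = {{1,2},{0,3}}"
proof -
  have two: "{..<2::nat} = {0,1}" by auto
  have h: "(0 + 2*2 - 1) mod (2*2) = (3::nat)" "(0+1+1) mod (2*2) = (2::nat)"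
    "(1 + 2*2 - 0) mod (2*2) = (1::nat)" "(1+1+0) mod (2*2) = (2::nat)"
    "(1 + 2*2 - 1) mod (2*2) = (0::nat)" "(1+1+1) mod (2*2) = (3::nat)" by simp_all
  have "class_edge 2 0 0 = {0,1}" by (simp add: class_edge_def)
  moreover have "class_edge 2 0 1 = {3,2}" "class_edge 2 1 0 = {1,2}" "class_edge 2 1 1 = {0,3}"
    unfolding class_edge_def by (simp_all only: h)
  ultimately show "par_class 2 0 = {{0,1},{3,2}}" "par_class 2 1 = {{1,2},{0,3}}"
    unfolding par_class_def two by simp_all
qed

lemma rotations_order_2:
  "rot_edges 2 0 {{0,1},{1,2}} = {{0,1},{1,2}}" "rot_edges 2 1 {{0,1},{1,2}} = {{1,2},{2,3}}"
  "rot_edges 2 2 {{0,1},{1,2}} = {{2,3},{3,0}}" "rot_edges 2 3 {{0,1},{1,2}} = {{3,0},{0,1}}"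
proof -
  have rs: "rot_edges 2 s {{0,1},{1,2}} = {{rot 2 s 0, rot 2 s 1}, {rot 2 s 1, rot 2 s 2}}" for s
    unfolding rot_edges_def by simp
  have "rot 2 0 0 = 0" "rot 2 0 1 = 1" "rot 2 0 2 = 2" "rot 2 1 0 = 1" "rot 2 1 1 = 2" "rot 2 1 2 = 3"
    "rot 2 2 0 = 2" "rot 2 2 1 = 3" "rot 2 2 2 = 0" "rot 2 3 0 = 3" "rot 2 3 1 = 0" "rot 2 3 2 = 1"
    by (simp_all add: rot_def)
  then show "rot_edges 2 0 {{0,1},{1,2}} = {{0,1},{1,2}}" "rot_edges 2 1 {{0,1},{1,2}} = {{1,2},{2,3}}"
    "rot_edges 2 2 {{0,1},{1,2}} = {{2,3},{3,0}}" "rot_edges 2 3 {{0,1},{1,2}} = {{3,0},{0,1}}"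
    unfolding rs by simp_all
qed

lemma blockers_order_2:
  assumes B: "is_blocker 2 B"
  shows "\<exists>s<2*2. \<exists>j d. caterpillar 2 j d \<and> B = rot_edges 2 s (cat_blocker 2 d)"
proof -
  have BM: "\<forall>M. is_SPM 2 M \<longrightarrow> B \<inter> M \<noteq> {}" using B unfolding is_blocker_def is_blocking_set_def by blast
  obtain a where a: "a \<in> B" "a \<in> par_class 2 0" using BM par_class_SPM[of 2 0] by auto
  obtain b where b: "b \<in> B" "b \<in> par_class 2 1" using BM par_class_SPM[of 2 1] by auto
  have "(\<Sum>a) mod (2*2) = 2*0+1" by (rule par_class_sum) (use a in simp_all)
  moreover have "(\<Sum>b) mod (2*2) = 2*1+1" by (rule par_class_sum) (use b in simp_all)
  ultimately have "a \<noteq> b" by auto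
  then have "card {a, b} = card B" using B by (simp add: is_blocker_def)
  then have "{a, b} = B" using card_subset_eq[OF blocker_finite[OF B]] a(1) b(1) by simp
  then have Bab: "B = {a, b}" by simp
  define d0 :: "nat \<Rightarrow> nat" where "d0 = (\<lambda>_. 0)"
  have c: "caterpillar 2 2 d0" unfolding caterpillar_def d0_def by simp
  have two: "{..<2::nat} = {0,1}" by auto
  have e0: "cat_edge d0 0 = {0,1}" unfolding cat_edge_def d0_def by simp
  have "Suc 1 + 0 = (2::nat)" "(1::nat) - 0 = 1" by simp_all
  then have e1: "cat_edge d0 1 = {1,2}" unfolding cat_edge_def d0_def by (simp only:)
  have N: "cat_blocker 2 d0 = {{0,1},{1,2}}" unfolding cat_blocker_def two using e0 e1 by simp
  have found: "\<exists>s<2*2. \<exists>j d. caterpillar 2 j d \<and> B = rot_edges 2 s (cat_blocker 2 d)"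
    if "s < 2*2" "B = rot_edges 2 s {{0,1},{1,2}}" for s
    using that c unfolding N[symmetric] by blast
  have "a = {0,1} \<or> a = {3,2}" "b = {1,2} \<or> b = {0,3}"
    using a(2) b(2) par_classes_order_2 by auto
  then show ?thesis
  proof (elim disjE)
    assume "a = {0,1}" "b = {1,2}"
    then show ?thesis using found[of 0] rotations_order_2(1) Bab by simp
  next
    assume "a = {0,1}" "b = {0,3}"
    then show ?thesis using found[of 3] rotations_order_2(4) Bab by (simp add: insert_commute)
  next
    assume "a = {3,2}" "b = {1,2}"
    then show ?thesis using found[of 1] rotations_order_2(2) Bab by (simp add: insert_commute)
  next
    assume "a = {3,2}" "b = {0,3}"
    then show ?thesis using found[of 2] rotations_order_2(3) Bab by (simp add: insert_commute)
  qed
qed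

lemma blocker_normal_rotation:
  assumes M3: "3 \<le> M" and B: "is_blocker M B"
  obtains r where "{2*M-3, 2*M-2} \<in> rot_edges M r B" "{2*M-2, 2*M-1} \<notin> rot_edges M r B"
proof -
  obtain v where v: "bnd M (v + 2*M - 1) \<in> B" "bnd M v \<notin> B"
    using blocker_boundary_end[OF _ B] M3 by auto
  define q where "q = v mod (2*M)"
  have q: "q < 2*M" unfolding q_def using M3 by simp
  define r where "r = 4*M - 2 - q"
  have "(v + r) mod (2*M) = (q + r) mod (2*M)" unfolding q_def by (simp add: mod_add_left_eq)
  also have "q + r = (2*M - 2) + 2*M" unfolding r_def using q M3 by simp
  also have "((2*M - 2) + 2*M) mod (2*M) = (2*M - 2) mod (2*M)" by (rule mod_add_self2)
  finally have "(v + r) mod (2*M) = 2*M - 2" using M3 by simp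
  then have "rot M r ` bnd M v = bnd M (2*M-2)" using rot_bnd[of M r v] bnd_mod[of M "v + r"] by simp
  moreover have "Suc (2*M-2) = 2*M-1" "Suc (2*M-2) < 2*M" using M3 by simp_all
  ultimately have last: "rot M r ` bnd M v = {2*M-2, 2*M-1}" using bnd_lt[of "2*M-2" M] by simp
  have e: "v + 2*M - 1 + r = v + (2*M - 1 + r)" using M3 by simp
  have "(v + 2*M - 1 + r) mod (2*M) = (q + (2*M - 1 + r)) mod (2*M)"
    unfolding e q_def by (rule mod_add_left_eq[symmetric])
  also have "q + (2*M - 1 + r) = (2*M - 3) + 2*M*2" unfolding r_def using q M3 by simp
  also have "((2*M - 3) + 2*M*2) mod (2*M) = (2*M - 3) mod (2*M)" by (rule mod_mult_self2)
  finally have "(v + 2*M - 1 + r) mod (2*M) = 2*M - 3" using M3 by simp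
  then have "rot M r ` bnd M (v + 2*M - 1) = bnd M (2*M-3)"
    using rot_bnd[of M r "v + 2*M - 1"] bnd_mod[of M "v + 2*M - 1 + r"] by simp
  moreover have "Suc (2*M-3) = 2*M-2" "Suc (2*M-3) < 2*M" using M3 by simp_all
  ultimately have first: "rot M r ` bnd M (v + 2*M - 1) = {2*M-3, 2*M-2}"
    using bnd_lt[of "2*M-3" M] by simp
  have "rot M r ` bnd M (v + 2*M - 1) \<in> rot_edges M r B"
    unfolding rot_edges_def using v(1) by (rule imageI)
  then have "{2*M-3, 2*M-2} \<in> rot_edges M r B" by (simp only: first)
  moreover have "{2*M-2, 2*M-1} \<notin> rot_edges M r B"
  proof
    assume "{2*M-2, 2*M-1} \<in> rot_edges M r B"
    then obtain e where "e \<in> B" "rot M r ` e = rot M r ` bnd M v"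
      unfolding rot_edges_def last by auto
    then have "e = bnd M v" using blocker_edge[OF B] bnd_sub[of M v] M3 rot_image_eq_iff by auto
    then show False using \<open>e \<in> B\<close> v(2) by simp
  qed
  ultimately show ?thesis using that by blast
qed

lemma rotate_back_insert:
  assumes n: "2 \<le> n" and s: "s < 2*n" and c: "caterpillar n j d"
  shows "rot_edges (Suc n) (2 * Suc n - s) (insert {2*n-1, 2*n} (rot_edges n s (cat_blocker n d)))
       = (\<lambda>e. lift (2*n - s) ` e) ` cat_blocker n d \<union> {{2*n-1-s, 2*n-s}}"
proof -
  let ?X = "rot_edges n s (cat_blocker n d)"
  have sub: "\<forall>e\<in>cat_blocker n d. e \<subseteq> {..<2*n}" using cat_blocker_sub[OF c] by blast
  have "\<forall>e\<in>?X. e \<subseteq> {..<2 * Suc n - 2}" using rot_lt n unfolding rot_edges_def by auto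
  then have "rot_edges (Suc n) (2 * Suc n - s) ?X = (\<lambda>e. lift (2*n - s) ` e) ` rot_edges n (2*n - s) ?X"
    using rot_edges_lift[of s "Suc n" ?X] s by simp
  also have "rot_edges n (2*n - s) ?X = cat_blocker n d"
    using rot_edges_inverse[OF sub, of s] s by simp
  finally have part: "rot_edges (Suc n) (2 * Suc n - s) ?X = (\<lambda>e. lift (2*n - s) ` e) ` cat_blocker n d" .
  have "rot (Suc n) (2 * Suc n - s) (2*n-1) = 2*n-1-s" "rot (Suc n) (2 * Suc n - s) (2*n) = 2*n-s"
    unfolding rot_def using s n by (simp_all add: mod_if)
  then show ?thesis using part by (simp add: rot_edges_insert)
qed

text \<open>By induction on m, every blocker is a rotation of a caterpillar: normalise it by a
  rotation, remove {2m-3, 2m-2}, apply the induction hypothesis, rotate back and reinsert.\<close>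

lemma blocker_is_rotated_caterpillar:
  assumes "2 \<le> m" "is_blocker m B"
  shows "\<exists>s<2*m. \<exists>j d. caterpillar m j d \<and> B = rot_edges m s (cat_blocker m d)"
  using assms
proof (induction m arbitrary: B rule: nat_induct_at_least)
  case base
  then show ?case using blockers_order_2 by simp
next
  case (Suc n)
  have n: "2 \<le> n" and B: "is_blocker (Suc n) B" by fact+
  obtain r where g: "{2*n-1, 2*n} \<in> rot_edges (Suc n) r B" and nb: "{2*n, 2*n+1} \<notin> rot_edges (Suc n) r B"
    using blocker_normal_rotation[of "Suc n" B] B n by (auto simp: numeral_3_eq_3)
  let ?B1 = "rot_edges (Suc n) r B"
  have B1: "is_blocker (Suc n) ?B1" using rot_blocker B by simp
  have "is_blocker n (?B1 - {{2*n-1, 2*n}})"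
    using blocker_remove_end(1)[of "Suc n" ?B1] B1 g nb n by (simp add: numeral_3_eq_3)
  then obtain s j' d' where s: "s < 2*n" and c': "caterpillar n j' d'"
    and IH: "?B1 - {{2*n-1, 2*n}} = rot_edges n s (cat_blocker n d')"
    using Suc.IH by blast
  have "?B1 = insert {2*n-1, 2*n} (rot_edges n s (cat_blocker n d'))" using g IH by blast
  moreover have "Suc (2*n-1-s) = 2*n - s" using s by simp
  ultimately have B2: "rot_edges (Suc n) (2 * Suc n - s) ?B1
                 = (\<lambda>e. lift (Suc (2*n-1-s)) ` e) ` cat_blocker n d' \<union> {{2*n-1-s, Suc (2*n-1-s)}}"
    using rotate_back_insert[OF n s c'] by simp
  have "is_blocker (Suc n) (rot_edges (Suc n) (2 * Suc n - s) ?B1)" using rot_blocker B1 by simp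
  then obtain j d where c: "caterpillar (Suc n) j d"
    and "rot_edges (Suc n) (2 * Suc n - s) ?B1 = cat_blocker (Suc n) d"
    using insert_blocker_caterpillar[OF c' n, of "2*n-1-s"] s B2 by auto
  then have "rot_edges (Suc n) (2 * Suc n - s + r) B = cat_blocker (Suc n) d"
    by (simp add: rot_edges_add)
  then obtain s' where "s' < 2 * Suc n" "B = rot_edges (Suc n) s' (cat_blocker (Suc n) d)"
    using rot_edges_solve[of B "Suc n"] blocker_edge[OF B] by blast
  then show ?case using c by blast
qed

lemma blocker_iff_rotated_caterpillar:
  assumes "2 \<le> m"
  shows "is_blocker m B \<longleftrightarrow> (\<exists>s<2*m. \<exists>j d. caterpillar m j d \<and> B = rot_edges m s (cat_blocker m d))"
  using blocker_is_rotated_caterpillar[OF assms] caterpillar_blocker rot_blocker assms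
  by (metis not_numeral_le_zero not_gr_zero)

section \<open>Counting the shapes\<close>

definition cat_shapes :: "nat \<Rightarrow> (nat \<Rightarrow> nat) set" where
  "cat_shapes m = {d. \<exists>j. caterpillar m j d}"

definition extend_shape :: "nat \<Rightarrow> (nat \<Rightarrow> nat) \<Rightarrow> nat \<Rightarrow> nat" where
  "extend_shape m d = d(m := m - 1)"

definition shift_shape :: "(nat \<Rightarrow> nat) \<Rightarrow> nat \<Rightarrow> nat" where
  "shift_shape d = (\<lambda>k. if k = 0 then 0 else d (k - 1))"

lemma caterpillar_extend:
  assumes m: "2 \<le> m" and c: "caterpillar m j d"
  shows "caterpillar (Suc m) j (extend_shape m d)"
  unfolding caterpillar_def
proof (intro conjI allI impI)
  have j: "1 \<le> j" "j \<le> m" using c by (auto simp: caterpillar_def)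
  show "1 \<le> j" "j \<le> Suc m" using j by auto
  show "extend_shape m d k = 0" if "k < j" for k using that j c unfolding extend_shape_def caterpillar_def by auto
  show "extend_shape m d k < extend_shape m d (Suc k)" if "j \<le> k" "Suc k < Suc m" for k
  proof (cases "Suc k < m")
    case True then show ?thesis using c that unfolding extend_shape_def caterpillar_def by auto
  next
    case False
    then have "Suc k = m" using that by simp
    then have "d k + 2 \<le> m" using c that unfolding caterpillar_def by auto
    then show ?thesis unfolding extend_shape_def using \<open>Suc k = m\<close> by auto
  qed
  show "1 \<le> extend_shape m d j" if "j < Suc m"
  proof (cases "j = m")
    case True then show ?thesis unfolding extend_shape_def using m by simp
  next
    case False then show ?thesis using c that unfolding extend_shape_def caterpillar_def by auto
  qed
  show "extend_shape m d k + 2 \<le> Suc m" if "j \<le> k" "k < Suc m" for k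
  proof (cases "k = m")
    case True then show ?thesis unfolding extend_shape_def using m by simp
  next
    case False then show ?thesis using c that unfolding extend_shape_def caterpillar_def by auto
  qed
  show "extend_shape m d k = 0" if "Suc m \<le> k" for k using c that unfolding extend_shape_def caterpillar_def by auto
qed

lemma caterpillar_shift:
  assumes c: "caterpillar m j d"
  shows "caterpillar (Suc m) (Suc j) (shift_shape d)"
  unfolding caterpillar_def
proof (intro conjI allI impI)
  have j: "1 \<le> j" "j \<le> m" using c by (auto simp: caterpillar_def)
  show "1 \<le> Suc j" "Suc j \<le> Suc m" using j by auto
  show "shift_shape d k = 0" if "k < Suc j" for k using that c unfolding shift_shape_def caterpillar_def by auto
  show "shift_shape d k < shift_shape d (Suc k)" if "Suc j \<le> k" "Suc k < Suc m" for k
  proof -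
    have "j \<le> k - 1" "Suc (k-1) < m" using that by auto
    then have "d (k-1) < d (Suc (k-1))" using c unfolding caterpillar_def by blast
    then show ?thesis unfolding shift_shape_def using that by simp
  qed
  show "1 \<le> shift_shape d (Suc j)" if "Suc j < Suc m" using c that unfolding shift_shape_def caterpillar_def by auto
  show "shift_shape d k + 2 \<le> Suc m" if "Suc j \<le> k" "k < Suc m" for k
  proof -
    have "d (k-1) + 2 \<le> m" using c that unfolding caterpillar_def by auto
    then show ?thesis unfolding shift_shape_def using that by simp
  qed
  show "shift_shape d k = 0" if "Suc m \<le> k" for k using c that unfolding shift_shape_def caterpillar_def by auto
qed

lemma caterpillar_restrict:
  assumes m: "2 \<le> m" and c: "caterpillar (Suc m) j d" and dm: "d m = m - 1"
  shows "caterpillar m j (d(m := 0))"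
proof -
  have jm: "j \<le> m"
  proof (rule ccontr)
    assume "\<not> j \<le> m"
    then have "d m = 0" using c unfolding caterpillar_def by auto
    then show False using dm m by simp
  qed
  show ?thesis unfolding caterpillar_def
  proof (intro conjI allI impI)
    show "1 \<le> j" "j \<le> m" using c jm by (auto simp: caterpillar_def)
    show "(d(m := 0)) k = 0" if "k < j" for k using that c unfolding caterpillar_def by auto
    show "(d(m := 0)) k < (d(m := 0)) (Suc k)" if "j \<le> k" "Suc k < m" for k
      using that c unfolding caterpillar_def by auto
    show "1 \<le> (d(m := 0)) j" if "j < m" using that c unfolding caterpillar_def by auto
    show "(d(m := 0)) k + 2 \<le> m" if "j \<le> k" "k < m" for k
      using cat_grow[OF c that(1), of m] that dm m by simp
    show "(d(m := 0)) k = 0" if "m \<le> k" for k using that c unfolding caterpillar_def by auto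
  qed
qed

lemma caterpillar_unshift:
  assumes m: "2 \<le> m" and c: "caterpillar (Suc m) j d" and dm: "d m \<noteq> m - 1"
  shows "caterpillar m (j - 1) (\<lambda>k. if k < m then d (Suc k) else 0)"
    and "shift_shape (\<lambda>k. if k < m then d (Suc k) else 0) = d"
proof -
  let ?d = "\<lambda>k. if k < m then d (Suc k) else 0"
  have j2: "2 \<le> j" using cat_j2[OF _ c] m by simp
  have dm2: "d m + 2 \<le> m"
    using c dm m unfolding caterpillar_def by (cases "j \<le> m") auto
  show "caterpillar m (j - 1) ?d" unfolding caterpillar_def
  proof (intro conjI allI impI)
    show "1 \<le> j - 1" "j - 1 \<le> m" using c j2 by (auto simp: caterpillar_def)
    show "?d k = 0" if "k < j - 1" for k using that c j2 unfolding caterpillar_def by auto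
    show "?d k < ?d (Suc k)" if "j - 1 \<le> k" "Suc k < m" for k
      using that c unfolding caterpillar_def by auto
    show "1 \<le> ?d (j - 1)" if "j - 1 < m" using that c j2 unfolding caterpillar_def by auto
    show "?d k + 2 \<le> m" if "j - 1 \<le> k" "k < m" for k
      using cat_dmono[OF c, of "Suc k" m] that dm2 by simp
    show "?d k = 0" if "m \<le> k" for k using that by auto
  qed
  show "shift_shape ?d = d"
  proof
    fix k show "shift_shape ?d k = d k"
      using c j2 unfolding shift_shape_def caterpillar_def by (cases "k = 0") auto
  qed
qed

text \<open>Hence the shapes of order m+1 split into two disjoint copies of the shapes of order m.\<close>

lemma cat_shapes_split:
  assumes m: "2 \<le> m"
  shows "cat_shapes (Suc m) = extend_shape m ` cat_shapes m \<union> shift_shape ` cat_shapes m"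
proof
  show "extend_shape m ` cat_shapes m \<union> shift_shape ` cat_shapes m \<subseteq> cat_shapes (Suc m)"
    unfolding cat_shapes_def using caterpillar_extend[OF m] caterpillar_shift by blast
  show "cat_shapes (Suc m) \<subseteq> extend_shape m ` cat_shapes m \<union> shift_shape ` cat_shapes m"
  proof
    fix d assume "d \<in> cat_shapes (Suc m)"
    then obtain j where c: "caterpillar (Suc m) j d" unfolding cat_shapes_def by blast
    show "d \<in> extend_shape m ` cat_shapes m \<union> shift_shape ` cat_shapes m"
    proof (cases "d m = m - 1")
      case True
      have "d(m := 0) \<in> cat_shapes m"
        using caterpillar_restrict[OF m c True] unfolding cat_shapes_def by blast
      moreover have "extend_shape m (d(m := 0)) = d" using True unfolding extend_shape_def by auto
      ultimately show ?thesis by (metis UnI1 image_eqI)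
    next
      case False
      let ?d = "\<lambda>k. if k < m then d (Suc k) else 0"
      have "?d \<in> cat_shapes m" using caterpillar_unshift(1)[OF m c False] unfolding cat_shapes_def by blast
      then show ?thesis using caterpillar_unshift(2)[OF m c False] by (metis UnI2 image_eqI)
    qed
  qed
qed

lemma cat_shapes_split_disjoint:
  assumes m: "2 \<le> m"
  shows "extend_shape m ` cat_shapes m \<inter> shift_shape ` cat_shapes m = {}"
    and "inj_on (extend_shape m) (cat_shapes m)" "inj_on shift_shape (cat_shapes m)"
proof -
  show "extend_shape m ` cat_shapes m \<inter> shift_shape ` cat_shapes m = {}"
  proof (rule ccontr)
    assume "extend_shape m ` cat_shapes m \<inter> shift_shape ` cat_shapes m \<noteq> {}"
    then obtain d d' j j' where c: "caterpillar m j d" "caterpillar m j' d'" and eq: "extend_shape m d = shift_shape d'"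
      unfolding cat_shapes_def by blast
    have "extend_shape m d m = m - 1" unfolding extend_shape_def by simp
    moreover have "shift_shape d' m = d' (m - 1)" unfolding shift_shape_def using m by simp
    moreover have "d' (m - 1) + 2 \<le> m \<or> d' (m-1) = 0"
      using c(2) m unfolding caterpillar_def by (cases "j' \<le> m - 1") auto
    moreover have "extend_shape m d m = shift_shape d' m" using eq by simp
    ultimately show False using m by arith
  qed
  show "inj_on (extend_shape m) (cat_shapes m)"
  proof (rule inj_onI)
    fix d d' assume h: "d \<in> cat_shapes m" "d' \<in> cat_shapes m" "extend_shape m d = extend_shape m d'"
    show "d = d'"
    proof
      fix k show "d k = d' k"
      proof (cases "k = m")
        case True then show ?thesis using h unfolding cat_shapes_def caterpillar_def by auto
      next
        case False then show ?thesis using fun_cong[OF h(3), of k] unfolding extend_shape_def by simp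
      qed
    qed
  qed
  show "inj_on shift_shape (cat_shapes m)"
  proof (rule inj_onI)
    fix d d' assume h: "d \<in> cat_shapes m" "d' \<in> cat_shapes m" "shift_shape d = shift_shape d'"
    show "d = d'"
    proof
      fix k show "d k = d' k" using fun_cong[OF h(3), of "Suc k"] unfolding shift_shape_def by simp
    qed
  qed
qed

lemma cat_shapes_2: "cat_shapes 2 = {\<lambda>_. 0}"
proof
  show "cat_shapes 2 \<subseteq> {\<lambda>_. 0}"
  proof
    fix d assume "d \<in> cat_shapes 2"
    then obtain j where c: "caterpillar 2 j d" unfolding cat_shapes_def by blast
    have "2 \<le> j" by (rule cat_j2[OF _ c]) simp
    moreover have "j \<le> 2" using c by (simp add: caterpillar_def)
    ultimately have "j = 2" by simp
    then have "d = (\<lambda>_. 0)" using c unfolding caterpillar_def by (metis not_less)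
    then show "d \<in> {\<lambda>_. 0}" by simp
  qed
  show "{\<lambda>_. 0} \<subseteq> cat_shapes 2" unfolding cat_shapes_def caterpillar_def by auto
qed

lemma cat_shapes_card: "2 \<le> m \<Longrightarrow> finite (cat_shapes m) \<and> card (cat_shapes m) = 2 ^ (m - 2)"
proof (induction m rule: nat_induct_at_least)
  case base then show ?case using cat_shapes_2 by simp
next
  case (Suc m)
  have f: "finite (extend_shape m ` cat_shapes m)" "finite (shift_shape ` cat_shapes m)" using Suc.IH by auto
  have "card (cat_shapes (Suc m)) = card (extend_shape m ` cat_shapes m) + card (shift_shape ` cat_shapes m)"
    unfolding cat_shapes_split[OF Suc.hyps] by (rule card_Un_disjoint[OF f cat_shapes_split_disjoint(1)[OF Suc.hyps]])
  also have "\<dots> = 2 * card (cat_shapes m)"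
    using card_image[OF cat_shapes_split_disjoint(2)[OF Suc.hyps]] card_image[OF cat_shapes_split_disjoint(3)[OF Suc.hyps]] by simp
  also have "\<dots> = 2 ^ (Suc m - 2)"
  proof -
    have "Suc m - 2 = Suc (m - 2)" using Suc.hyps by simp
    then show ?thesis using Suc.IH by simp
  qed
  finally show ?case using f cat_shapes_split[OF Suc.hyps] by simp
qed

section \<open>The parametrisation is injective\<close>

lemma cat_blocker_bd:
  assumes m: "2 \<le> m" and c: "caterpillar m j d" and u: "u < 2*m"
  shows "bnd m u \<in> cat_blocker m d \<longleftrightarrow> u < j"
proof
  have jm: "j \<le> m" using c by (simp add: caterpillar_def)
  assume "u < j"
  then have "bnd m u = {u, Suc u}" using bnd_lt[of u m] jm m by simp
  moreover have "cat_edge d u = {u, Suc u}" using cat_zero[OF c \<open>u < j\<close>] unfolding cat_edge_def by simp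
  moreover have "u < m" using \<open>u < j\<close> jm by simp
  ultimately show "bnd m u \<in> cat_blocker m d" unfolding cat_blocker_def by (metis imageI lessThan_iff)
next
  assume "bnd m u \<in> cat_blocker m d"
  then obtain k where k: "k < m" "bnd m u = cat_edge d k" unfolding cat_blocker_def by blast
  have dk: "d k \<le> k" using cat_lo[OF c k(1)] by simp
  have lt: "k - d k < Suc k + d k" by simp
  show "u < j"
  proof (cases "Suc u < 2*m")
    case True
    then have "{u, Suc u} = {k - d k, Suc k + d k}" using k bnd_lt unfolding cat_edge_def by simp
    then have "u = k - d k" "Suc u = Suc k + d k" using lt by (auto simp: doubleton_eq_iff)
    then have "d k = 0" "u = k" using dk by auto
    then show ?thesis using cat_pos[OF c _ k(1)] by (cases "j \<le> k") auto
  next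
    case False
    then have "u = 2*m - 1" using u by simp
    then have "{2*m - 1, 0} = {k - d k, Suc k + d k}" using k bnd_last[of m] m unfolding cat_edge_def by simp
    then have "k - d k = 0" "Suc k + d k = 2*m - 1" using lt by (auto simp: doubleton_eq_iff)
    then have "d k = k" "k = m - 1" using dk by auto
    moreover have "d k + 1 \<le> k \<or> d k = 0" using cat_bounds(2)[OF c _ k(1)] cat_zero[OF c] by (cases "j \<le> k") auto
    ultimately show ?thesis using m by simp
  qed
qed

lemma cat_blocker_determines:
  assumes c: "caterpillar m j d" and c': "caterpillar m j' d'" and eq: "cat_blocker m d = cat_blocker m d'"
  shows "d = d'"
proof
  fix k show "d k = d' k"
  proof (cases "k < m")
    case True
    then have "cat_edge d k \<in> cat_blocker m d'" using eq unfolding cat_blocker_def by blast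
    then obtain k' where k': "k' < m" "cat_edge d k = cat_edge d' k'" unfolding cat_blocker_def by blast
    have "2*k+1 = 2*k'+1" using cat_edge_sum[OF c True] cat_edge_sum[OF c' k'(1)] k'(2) by simp
    then have "k = k'" by simp
    then have "{k - d k, Suc k + d k} = {k - d' k, Suc k + d' k}" using k'(2) unfolding cat_edge_def by simp
    then have "Suc k + d k \<in> {k - d' k, Suc k + d' k}" by blast
    then show ?thesis by auto
  next
    case False then show ?thesis using c c' unfolding caterpillar_def by auto
  qed
qed

text \<open>A nontrivial rotation never maps a caterpillar onto a caterpillar: the boundary edge
  {0, 1} is present and {2m-1, 0} absent in both, which pins the rotation to 0.\<close>

lemma rotated_caterpillar_eq:
  assumes m: "2 \<le> m" and c: "caterpillar m j d" and c': "caterpillar m j' d'"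
    and \<rho>: "\<rho> < 2*m" and Neq: "cat_blocker m d = rot_edges m \<rho> (cat_blocker m d')"
  shows "\<rho> = 0"
proof (rule ccontr)
  assume "\<rho> \<noteq> 0"
  have m0: "0 < m" using m by simp
  have sub: "\<forall>e\<in>cat_blocker m d'. e \<subseteq> {..<2*m}" using cat_blocker_sub[OF c'] by blast
  have mem: "bnd m w \<in> cat_blocker m d \<longleftrightarrow> bnd m (w + 2*m - \<rho>) \<in> cat_blocker m d'" for w
  proof -
    have r: "rot m \<rho> ` bnd m (w + 2*m - \<rho>) = bnd m w"
      using rot_bnd[of m \<rho> "w + 2*m - \<rho>"] bnd_add[of m w] \<rho> by simp
    show ?thesis
    proof
      assume "bnd m w \<in> cat_blocker m d"
      then obtain e where e: "e \<in> cat_blocker m d'" "rot m \<rho> ` e = rot m \<rho> ` bnd m (w + 2*m - \<rho>)"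
        using Neq r unfolding rot_edges_def by auto
      then have "e = bnd m (w + 2*m - \<rho>)"
        using rot_image_eq_iff[of e m "bnd m (w + 2*m - \<rho>)" \<rho>] sub bnd_sub[OF m0] by simp
      then show "bnd m (w + 2*m - \<rho>) \<in> cat_blocker m d'" using e by simp
    next
      assume "bnd m (w + 2*m - \<rho>) \<in> cat_blocker m d'"
      then show "bnd m w \<in> cat_blocker m d" using r Neq unfolding rot_edges_def by force
    qed
  qed
  have jm: "j \<le> m" "j' \<le> m" "1 \<le> j" using c c' by (auto simp: caterpillar_def)
  have "bnd m 0 \<in> cat_blocker m d" using cat_blocker_bd[OF m c, of 0] jm by simp
  then have a: "2*m - \<rho> < j'" using mem[of 0] cat_blocker_bd[OF m c', of "2*m - \<rho>"] \<open>\<rho> \<noteq> 0\<close> \<rho> by simp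
  have "bnd m (2*m - 1) \<notin> cat_blocker m d" using cat_blocker_bd[OF m c, of "2*m-1"] jm m by simp
  moreover have "bnd m (2*m - 1 + 2*m - \<rho>) = bnd m (2*m - 1 - \<rho>)"
    using bnd_add[of m "2*m - 1 - \<rho>"] a jm \<rho> by (simp add: algebra_simps)
  ultimately have "bnd m (2*m - 1 - \<rho>) \<notin> cat_blocker m d'" using mem[of "2*m - 1"] by simp
  then show False using cat_blocker_bd[OF m c', of "2*m - 1 - \<rho>"] a \<rho> by simp
qed

lemma rotated_caterpillar_inj:
  assumes m: "2 \<le> m" and s: "s < 2*m" "s' < 2*m" and c: "caterpillar m j d" "caterpillar m j' d'"
    and eq: "rot_edges m s (cat_blocker m d) = rot_edges m s' (cat_blocker m d')"
  shows "s = s' \<and> d = d'"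
proof -
  define \<rho> where "\<rho> = (2*m - s + s') mod (2*m)"
  have \<rho>: "\<rho> < 2*m" unfolding \<rho>_def using m by simp
  have "cat_blocker m d = rot_edges m (2*m - s) (rot_edges m s (cat_blocker m d))"
    using rot_edges_inverse[of "cat_blocker m d" m s] cat_blocker_sub[OF c(1)] s by simp
  also have "\<dots> = rot_edges m \<rho> (cat_blocker m d')"
    unfolding eq \<rho>_def rot_edges_mod by (simp add: rot_edges_add)
  finally have Neq: "cat_blocker m d = rot_edges m \<rho> (cat_blocker m d')" .
  then have "\<rho> = 0" using rotated_caterpillar_eq[OF m c \<rho>] by blast
  then have "cat_blocker m d = cat_blocker m d'"
    using Neq rot_edges_0[of "cat_blocker m d'" m] cat_blocker_sub[OF c(2)] by simp
  moreover have "s = s'"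
  proof (cases "s \<le> s'")
    case True
    then have "(2*m + (s' - s)) mod (2*m) = 0" using \<open>\<rho> = 0\<close> s unfolding \<rho>_def by simp
    then have "(s' - s) mod (2*m) = 0" by simp
    then show ?thesis using s True by simp
  next
    case False
    then have "(2*m - s + s') mod (2*m) = 2*m - s + s'" using s by simp
    then show ?thesis using \<open>\<rho> = 0\<close> False s unfolding \<rho>_def by simp
  qed
  ultimately show ?thesis using cat_blocker_determines[OF c] by blast
qed

lemma rotated_caterpillar_param_inj:
  assumes m: "2 \<le> m"
  shows "inj_on (\<lambda>(s, d). rot_edges m s (cat_blocker m d)) ({..<2*m} \<times> cat_shapes m)"
proof (rule inj_onI)
  fix p p' assume p: "p \<in> {..<2*m} \<times> cat_shapes m" "p' \<in> {..<2*m} \<times> cat_shapes m"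
    and eq: "(\<lambda>(s, d). rot_edges m s (cat_blocker m d)) p = (\<lambda>(s, d). rot_edges m s (cat_blocker m d)) p'"
  obtain s d s' d' where pp: "p = (s, d)" "p' = (s', d')" by (cases p, cases p') auto
  obtain j j' where "caterpillar m j d" "caterpillar m j' d'" using p unfolding pp cat_shapes_def by auto
  then show "p = p'" using rotated_caterpillar_inj[OF m, of s s' j d j' d'] p eq unfolding pp by simp
qed

theorem mainTheorem2:
  fixes m :: nat
  assumes "m \<ge> 2"
  shows "card {B. is_blocker m B} = m * 2 ^ (m - 1)"
proof -
  have "{B. is_blocker m B} = (\<lambda>(s, d). rot_edges m s (cat_blocker m d)) ` ({..<2*m} \<times> cat_shapes m)"
    using blocker_iff_rotated_caterpillar[OF assms] unfolding cat_shapes_def by auto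
  then have "card {B. is_blocker m B} = card ({..<2*m} \<times> cat_shapes m)"
    using card_image[OF rotated_caterpillar_param_inj[OF assms]] by simp
  also have "\<dots> = 2*m * 2 ^ (m - 2)" using cat_shapes_card[OF assms] by (simp add: card_cartesian_product)
  also have "\<dots> = m * 2 ^ (m - 1)"
  proof -
    have "m - 1 = Suc (m - 2)" using assms by simp
    then show ?thesis by simp
  qed
  finally show ?thesis .
qed

end
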